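(* Let $Q$ be a Dynkin quiver. For every $x\in\mathcal{I}_Q$ there is an isomorphism in $\mathcal{M}_Q$ $$\mu_x Y(x)\otimes Y(\tau^{-1}x)\;\simeq\;F(x)\otimes\bigotimes_{y:\,x\to y}Y(y),$$ the tensor product on the right running over the arrows $x\to y$ of $\mathbb{Z}Q$; equivalently, both sides have the same underlying multiset and the same function.
   Context: $\mathbf{k}$ is an algebraically closed field of characteristic $0$. $Q$ is a Dynkin quiver, $\mathbb{Z}Q$ its repetition quiver (vertices $(i,p)$ with $p$ of fixed parity depending on $i$, alternating along edges; arrows $(t,p)\to(s,p+1)$ and $(s,p)\to(t,p+1)$ for each arrow $s\to t$ of $Q$; $\tau(i,p)=(i,p-2)$), identified via Happel's theorem with the set $\mathcal{I}_Q$ of isomorphism classes of indecomposable objects of $\mathcal{D}:=\mathcal{D}^b(\mathrm{Rep}\,Q)$ ($\tau$ = AR translation, arrows = irreducible morphisms). $\Sigma$ is the shift, $S:=\tau\Sigma$ the Serre functor. For $f:(\mathbb{Z}Q)_0\to\mathbb{Z}$, $\widetilde f(x):=f(x)+f(\tau x)-\sum_{y\to x}f(y)$; $\delta_x$ is the indicator of $\{x\}$. A section of $Q$ in $\mathbb{Z}Q$ is a set $\{(i,p_i)\}_{i\in I}$ with $p_{s(\alpha)}-p_{t(\alpha)}=1$ for every arrow $\alpha$; $Q_x$ is the section containing $x$. $h_x$ is the unique function with $\widetilde{h_x}=\delta_x$ and $h_x(y)=\dim\mathrm{Hom}_{\mathcal D}(x,y)$ for $y\in Q_x$. Objects of $\widetilde{\mathcal{M}_Q}$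 are pairs $(X,f)$, $X$ a multiset of elements of $\mathcal{I}_Q$, $f$ with $\widetilde f$ finitely supported; $\mathcal{M}_Q$ is its additive hull. The Serre tilting at a finite sub-multiset $Z\subseteq X$ is $\mu_Z(X,f):=((X\setminus Z)\sqcup\{Sz:z\in Z\},\ f-\sum_{z\in Z}\delta_z)$; $\mu_x:=\mu_{\{x\}}$. The monoidal structure is $(X,f)\otimes(Y,g):=(X\sqcup Y,f+g)$ (disjoint union of multisets). The hammock multiset $H(x)$ contains exactly $\dim_{\mathbf k}\mathrm{Hom}_{\mathcal D}(x,y)$ copies of each $y\in\mathcal{I}_Q$; the hammock object is $Y(x):=(H(x),h_x)$; and $F(x):=(\{Sx,\Sigma x\},0)$. *)

theory Defs
  imports Main "HOL-Library.Multiset"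
begin

text \<open>A quiver Q is given by a finite vertex set I and a set A of arrows (s,t), meaning s -> t.
Dynkin quivers have no multiple arrows, so a set of pairs suffices.\<close>

definition tits_form :: "'i set \<Rightarrow> ('i \<times> 'i) set \<Rightarrow> ('i \<Rightarrow> int) \<Rightarrow> int" where
  "tits_form I A v = (\<Sum>i\<in>I. (v i)^2) - (\<Sum>(s,t)\<in>A. v s * v t)"

definition dynkin_quiver :: "'i set \<Rightarrow> ('i \<times> 'i) set \<Rightarrow> bool" where
  "dynkin_quiver I A \<longleftrightarrow> finite I \<and> I \<noteq> {} \<and> A \<subseteq> I \<times> I
     \<and> (\<forall>i\<in>I. \<forall>j\<in>I. (i, j) \<in> (A \<union> A\<inverse>)\<^sup>*)
     \<and> (\<forall>v. (\<exists>i\<in>I. v i \<noteq> 0) \<longrightarrow> tits_form I A v > 0)"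

definition alternating :: "('i \<times> 'i) set \<Rightarrow> ('i \<Rightarrow> bool) \<Rightarrow> bool" where
  "alternating A par \<longleftrightarrow> (\<forall>(s,t)\<in>A. par s \<noteq> par t)"

definition zq_V :: "'i set \<Rightarrow> ('i \<Rightarrow> bool) \<Rightarrow> ('i \<times> int) set" where
  "zq_V I par = {(i, p). i \<in> I \<and> (even p \<longleftrightarrow> par i)}"

definition zq_arr :: "'i set \<Rightarrow> ('i \<times> 'i) set \<Rightarrow> ('i \<Rightarrow> bool) \<Rightarrow> 'i \<times> int \<Rightarrow> 'i \<times> int \<Rightarrow> bool" where
  "zq_arr I A par x y \<longleftrightarrow> x \<in> zq_V I par \<and> y \<in> zq_V I par \<and> snd y = snd x + 1 \<and>
     (\<exists>(s,t)\<in>A. (fst x = t \<and> fst y = s) \<or> (fst x = s \<and> fst y = t))"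

definition zq_preds where "zq_preds I A par y = {z. zq_arr I A par z y}"
definition zq_succs where "zq_succs I A par x = {y. zq_arr I A par x y}"

definition tau :: "'i \<times> int \<Rightarrow> 'i \<times> int" where "tau x = (fst x, snd x - 2)"
definition tau_inv :: "'i \<times> int \<Rightarrow> 'i \<times> int" where "tau_inv x = (fst x, snd x + 2)"

definition delta :: "'i \<times> int \<Rightarrow> 'i \<times> int \<Rightarrow> int" where
  "delta x y = (if y = x then 1 else 0)"

definition tilde :: "'i set \<Rightarrow> ('i \<times> 'i) set \<Rightarrow> ('i \<Rightarrow> bool) \<Rightarrow> ('i \<times> int \<Rightarrow> int) \<Rightarrow> 'i \<times> int \<Rightarrow> int" where
  "tilde I A par f x = f x + f (tau x) - (\<Sum>y\<in>zq_preds I A par x. f y)"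

text \<open>Hammock knitting: layer k consists of the vertices (i, snd x + k).  The value at x is 1;
otherwise the value is max(0, sum over predecessors - value at tau).  Returns layer k.\<close>
fun knit :: "'i set \<Rightarrow> ('i \<times> 'i) set \<Rightarrow> ('i \<Rightarrow> bool) \<Rightarrow> 'i \<times> int \<Rightarrow> nat \<Rightarrow> 'i \<Rightarrow> int" where
  "knit I A par x 0 = (\<lambda>i. if i = fst x then 1 else 0)"
| "knit I A par x (Suc 0) = (let a = knit I A par x 0 in
     (\<lambda>i. max 0 (\<Sum>j\<in>{j. zq_arr I A par (j, snd x) (i, snd x + 1)}. a j)))"
| "knit I A par x (Suc (Suc k)) = (let a = knit I A par x (Suc k); b = knit I A par x k in
     (\<lambda>i. max 0 ((\<Sum>j\<in>{j. zq_arr I A par (j, snd x + int k + 1) (i, snd x + int k + 2)}. a j) - b i)))"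

definition hom_dim :: "'i set \<Rightarrow> ('i \<times> 'i) set \<Rightarrow> ('i \<Rightarrow> bool) \<Rightarrow> 'i \<times> int \<Rightarrow> 'i \<times> int \<Rightarrow> int" where
  "hom_dim I A par x y = (if snd y < snd x then 0 else knit I A par x (nat (snd y - snd x)) (fst y))"

text \<open>Serre functor on objects, characterised by Serre duality dim Hom(y, S x) = dim Hom(x, y).\<close>
definition serre :: "'i set \<Rightarrow> ('i \<times> 'i) set \<Rightarrow> ('i \<Rightarrow> bool) \<Rightarrow> 'i \<times> int \<Rightarrow> 'i \<times> int" where
  "serre I A par x = (THE z. z \<in> zq_V I par \<and>
      (\<forall>y\<in>zq_V I par. hom_dim I A par y z = hom_dim I A par x y))"

text \<open>Shift: since S = tau Sigma, Sigma = tau^{-1} S.\<close>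
definition shift :: "'i set \<Rightarrow> ('i \<times> 'i) set \<Rightarrow> ('i \<Rightarrow> bool) \<Rightarrow> 'i \<times> int \<Rightarrow> 'i \<times> int" where
  "shift I A par x = tau_inv (serre I A par x)"

definition is_section :: "'i set \<Rightarrow> ('i \<times> 'i) set \<Rightarrow> ('i \<times> int) set \<Rightarrow> bool" where
  "is_section I A S \<longleftrightarrow> (\<exists>p :: 'i \<Rightarrow> int. (\<forall>(s,t)\<in>A. p s - p t = 1) \<and> S = {(i, p i) | i. i \<in> I})"

definition section_of :: "'i set \<Rightarrow> ('i \<times> 'i) set \<Rightarrow> 'i \<times> int \<Rightarrow> ('i \<times> int) set" where
  "section_of I A x = (THE S. is_section I A S \<and> x \<in> S)"

definition hfun :: "'i set \<Rightarrow> ('i \<times> 'i) set \<Rightarrow> ('i \<Rightarrow> bool) \<Rightarrow> 'i \<times> int \<Rightarrow> 'i \<times> int \<Rightarrow> int" where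
  "hfun I A par x = (THE f. (\<forall>v\<in>zq_V I par. tilde I A par f v = delta x v)
      \<and> (\<forall>y\<in>section_of I A x. f y = hom_dim I A par x y)
      \<and> (\<forall>v. v \<notin> zq_V I par \<longrightarrow> f v = 0))"

type_synonym 'i obj = "('i \<times> int) multiset \<times> ('i \<times> int \<Rightarrow> int)"

definition hammock :: "'i set \<Rightarrow> ('i \<times> 'i) set \<Rightarrow> ('i \<Rightarrow> bool) \<Rightarrow> 'i \<times> int \<Rightarrow> ('i \<times> int) multiset" where
  "hammock I A par x = (THE M. \<forall>y. count M y =
      (if y \<in> zq_V I par then nat (hom_dim I A par x y) else 0))"

definition Yobj :: "'i set \<Rightarrow> ('i \<times> 'i) set \<Rightarrow> ('i \<Rightarrow> bool) \<Rightarrow> 'i \<times> int \<Rightarrow> 'i obj" where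
  "Yobj I A par x = (hammock I A par x, hfun I A par x)"

definition Fobj :: "'i set \<Rightarrow> ('i \<times> 'i) set \<Rightarrow> ('i \<Rightarrow> bool) \<Rightarrow> 'i \<times> int \<Rightarrow> 'i obj" where
  "Fobj I A par x = ({#serre I A par x, shift I A par x#}, (\<lambda>_. 0))"

definition mu :: "'i set \<Rightarrow> ('i \<times> 'i) set \<Rightarrow> ('i \<Rightarrow> bool) \<Rightarrow> 'i \<times> int \<Rightarrow> 'i obj \<Rightarrow> 'i obj" where
  "mu I A par z Xf = (fst Xf - {#z#} + {#serre I A par z#}, (\<lambda>v. snd Xf v - delta z v))"

definition tensor :: "'i obj \<Rightarrow> 'i obj \<Rightarrow> 'i obj" where
  "tensor Xf Yg = (fst Xf + fst Yg, (\<lambda>v. snd Xf v + snd Yg v))"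

definition tensor_set :: "('a \<Rightarrow> 'i obj) \<Rightarrow> 'a set \<Rightarrow> 'i obj" where
  "tensor_set G S = ((\<Sum>a\<in>S. fst (G a)), (\<lambda>v. \<Sum>a\<in>S. snd (G a) v))"

definition mq_iso :: "'i set \<Rightarrow> ('i \<Rightarrow> bool) \<Rightarrow> 'i obj \<Rightarrow> 'i obj \<Rightarrow> bool" where
  "mq_iso I par Xf Yg \<longleftrightarrow> fst Xf = fst Yg \<and> (\<forall>v\<in>zq_V I par. snd Xf v = snd Yg v)"

end

theory Submission
  imports Defs Complex_Main
begin

text \<open>By Happel's theorem \<open>dim Hom(x, -)\<close> is computed by knitting on ZQ.  Dropping the clamp
  \<open>max 0\<close> from the knitting gives the additive function \<open>h\<^sub>x\<close>, which solves the mesh equations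
  \<open>h\<^sub>x\<^sup>~ = \<delta>\<^sub>x\<close> everywhere.  Two consecutive layers of \<open>h\<^sub>x\<close> pass to the next two by a reflection,
  so they form a root of the Tits form.  There are finitely many positive roots, hence some layer
  pair is not positive, and the first such one is the negative of a simple root at a vertex \<open>\<Sigma>x\<close>.
  Before it the clamp does nothing, after it the hammock is zero, so
  \<open>dim Hom(x, -) = h\<^sub>x + h\<^sub>\<Sigma>\<^sub>x\<close>.  Running the same argument on the mirror image of ZQ
  shows that \<open>dim Hom(-, v)\<close> satisfies the mesh relation in its first argument too.  This gives
  Serre duality with \<open>S x = \<tau>\<Sigma>x\<close>, and also the identity
  \<open>dim Hom(x, v) + dim Hom(\<tau>\<^sup>-\<^sup>1x, v) - \<Sum>\<^sub>x\<^sub>\<rightarrow>\<^sub>y dim Hom(y, v) = \<delta>\<^sub>x\<^sub>,\<^sub>v + \<delta>\<^sub>\<Sigma>\<^sub>x\<^sub>,\<^sub>v\<close>,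
  which is the multiset part of the theorem.  The function part is the same identity for \<open>h\<close>.
  It holds because \<open>h\<^sub>x\<close> is the unique solution of the mesh equations that agrees with
  \<open>dim Hom(x, -)\<close> on the section through \<open>x\<close>.\<close>

lemma tau_simps[simp]:
  "fst (tau v) = fst v" "snd (tau v) = snd v - 2"
  "fst (tau_inv v) = fst v" "snd (tau_inv v) = snd v + 2"
  by (simp_all add: tau_def tau_inv_def)

lemma tau_tau_inv[simp]: "tau (tau_inv v) = v" "tau_inv (tau v) = v"
  by (simp_all add: tau_def tau_inv_def)

lemma tau_eq_iff: "tau a = tau b \<longleftrightarrow> a = b"
  by (metis tau_tau_inv(2))

lemma tau_inv_eq_iff: "tau_inv a = tau_inv b \<longleftrightarrow> a = b"
  by (metis tau_tau_inv(1))

lemma tau_inv_eq_iff_tau: "tau_inv a = z \<longleftrightarrow> a = tau z"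
  by (metis tau_tau_inv)

text \<open>The reflection \<open>(i, p) \<mapsto> (i, -p)\<close> reverses every arrow of ZQ.\<close>

definition mirror :: "'i \<times> int \<Rightarrow> 'i \<times> int" where
  "mirror v = (fst v, - snd v)"

lemma mirror_mirror[simp]: "mirror (mirror v) = v"
  by (simp add: mirror_def)

lemma mirror_eq_iff: "mirror a = mirror b \<longleftrightarrow> a = b"
  by (metis mirror_mirror)

lemma fst_mirror[simp]: "fst (mirror v) = fst v" and snd_mirror[simp]: "snd (mirror v) = - snd v"
  by (simp_all add: mirror_def)

lemma mirror_tau: "mirror (tau v) = tau_inv (mirror v)" "mirror (tau_inv v) = tau (mirror v)"
  by (simp_all add: tau_def tau_inv_def mirror_def)

lemma layer_induct:
  fixes P :: "'a \<times> int \<Rightarrow> bool"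
  assumes base: "\<And>v. snd v < L \<Longrightarrow> P v"
    and step: "\<And>v. snd v \<ge> L \<Longrightarrow> (\<And>w. snd w < snd v \<Longrightarrow> P w) \<Longrightarrow> P v"
  shows "P v"
proof (induction v rule: measure_induct_rule[where f = "\<lambda>v. nat (snd v - L)"])
  case (less v)
  show ?case
  proof (cases "snd v < L")
    case False
    show ?thesis
    proof (rule step)
      fix w :: "'a \<times> int" assume "snd w < snd v"
      then show "P w" using less False base by (cases "snd w < L") auto
    qed (use False in simp)
  qed (rule base)
qed

lemma layer_induct_down:
  fixes P :: "'a \<times> int \<Rightarrow> bool"
  assumes base: "\<And>v. snd v > L \<Longrightarrow> P v"
    and step: "\<And>v. snd v \<le> L \<Longrightarrow> (\<And>w. snd w > snd v \<Longrightarrow> P w) \<Longrightarrow> P v"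
  shows "P v"
proof (induction v rule: measure_induct_rule[where f = "\<lambda>v. nat (L - snd v)"])
  case (less v)
  show ?case
  proof (cases "snd v > L")
    case False
    show ?thesis
    proof (rule step)
      fix w :: "'a \<times> int" assume "snd w > snd v"
      then show "P w" using less False base by (cases "snd w > L") auto
    qed (use False in simp)
  qed (rule base)
qed

section \<open>Integer vectors of bounded value under a positive definite form\<close>

definition quad_form :: "('i \<Rightarrow> 'i \<Rightarrow> rat) \<Rightarrow> 'i set \<Rightarrow> ('i \<Rightarrow> rat) \<Rightarrow> rat" where
  "quad_form c I v = (\<Sum>i\<in>I. \<Sum>j\<in>I. c i j * v i * v j)"

definition quad_form_posdef :: "('i \<Rightarrow> 'i \<Rightarrow> rat) \<Rightarrow> 'i set \<Rightarrow> bool" where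
  "quad_form_posdef c I \<longleftrightarrow> (\<forall>v. (\<exists>i\<in>I. v i \<noteq> 0) \<longrightarrow> 0 < quad_form c I v)"

lemma quad_form_cong: "(\<And>i. i \<in> I \<Longrightarrow> v i = w i) \<Longrightarrow> quad_form c I v = quad_form c I w"
  unfolding quad_form_def by (intro sum.cong) auto

lemma quad_form_complete_square:
  fixes c :: "'i \<Rightarrow> 'i \<Rightarrow> rat"
  assumes J: "finite J" "a \<notin> J" and d0: "c a a \<noteq> 0"
  defines "L \<equiv> \<lambda>v. \<Sum>j\<in>J. (c a j + c j a) * v j"
    and "c' \<equiv> \<lambda>i j. c i j - (c a i + c i a) * (c a j + c j a) / (4 * c a a)"
  shows "quad_form c (insert a J) v = c a a * (v a + L v / (2 * c a a))\<^sup>2 + quad_form c' J v"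
proof -
  let ?d = "c a a"
  have decomp: "quad_form c (insert a J) v = ?d * v a * v a + v a * L v + quad_form c J v"
  proof -
    have "quad_form c (insert a J) v = (\<Sum>j\<in>insert a J. c a j * v a * v j) + (\<Sum>i\<in>J. \<Sum>j\<in>insert a J. c i j * v i * v j)"
      unfolding quad_form_def using J by simp
    also have "(\<Sum>j\<in>insert a J. c a j * v a * v j) = ?d * v a * v a + (\<Sum>j\<in>J. c a j * v a * v j)"
      using J by simp
    also have "(\<Sum>i\<in>J. \<Sum>j\<in>insert a J. c i j * v i * v j) = (\<Sum>i\<in>J. c i a * v i * v a) + quad_form c J v"
      unfolding quad_form_def using J by (simp add: sum.distrib)
    finally show ?thesis unfolding L_def
      by (simp add: sum_distrib_left sum.distrib algebra_simps)
  qed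
  have L_square: "(\<Sum>i\<in>J. \<Sum>j\<in>J. (c a i + c i a) * (c a j + c j a) * v i * v j) = L v * L v"
    unfolding L_def sum_product by (intro sum.cong refl) (simp add: algebra_simps)
  have "quad_form c' J v = (\<Sum>i\<in>J. \<Sum>j\<in>J. c i j * v i * v j - (c a i + c i a) * (c a j + c j a) * v i * v j / (4 * ?d))"
    unfolding quad_form_def c'_def by (intro sum.cong refl) (simp add: algebra_simps diff_divide_distrib)
  also have "\<dots> = quad_form c J v - L v * L v / (4 * ?d)"
    unfolding quad_form_def L_square[symmetric] by (simp add: sum_subtractf sum_divide_distrib)
  finally have eliminated: "quad_form c' J v = quad_form c J v - L v * L v / (4 * ?d)" .
  have "?d * (v a + L v / (2 * ?d))\<^sup>2 = ?d * v a * v a + v a * L v + L v * L v / (4 * ?d)"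
    using d0 by (simp add: power2_eq_square field_simps)
  then show ?thesis unfolding decomp eliminated by (simp add: algebra_simps)
qed

lemma quad_form_posdef_insert:
  fixes c :: "'i \<Rightarrow> 'i \<Rightarrow> rat"
  assumes J: "finite J" "a \<notin> J" and pos: "quad_form_posdef c (insert a J)"
  defines "c' \<equiv> \<lambda>i j. c i j - (c a i + c i a) * (c a j + c j a) / (4 * c a a)"
  shows "c a a > 0" and "quad_form_posdef c' J"
proof -
  have "0 < quad_form c (insert a J) (\<lambda>i. if i = a then 1 else 0)"
    using pos unfolding quad_form_posdef_def by auto
  moreover have "quad_form c (insert a J) (\<lambda>i. if i = a then 1 else 0) = c a a"
    unfolding quad_form_def using J
    by (simp add: if_distrib[where f="\<lambda>x. _ * x"] sum.delta cong: if_cong)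
  ultimately show d0: "c a a > 0" by simp
  show "quad_form_posdef c' J"
    unfolding quad_form_posdef_def
  proof (intro allI impI)
    fix v :: "'i \<Rightarrow> rat" assume v: "\<exists>i\<in>J. v i \<noteq> 0"
    define w where "w = v(a := - (\<Sum>j\<in>J. (c a j + c j a) * v j) / (2 * c a a))"
    have "\<exists>i\<in>insert a J. w i \<noteq> 0" using v J by (auto simp: w_def)
    then have "0 < quad_form c (insert a J) w" using pos unfolding quad_form_posdef_def by blast
    have Lw: "(\<Sum>j\<in>J. (c a j + c j a) * w j) = (\<Sum>j\<in>J. (c a j + c j a) * v j)"
      unfolding w_def using J by (intro sum.cong) auto
    have qw: "quad_form c' J w = quad_form c' J v"
      by (rule quad_form_cong) (use J in \<open>auto simp: w_def\<close>)
    have "quad_form c (insert a J) w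
        = c a a * (w a + (\<Sum>j\<in>J. (c a j + c j a) * w j) / (2 * c a a))\<^sup>2 + quad_form c' J w"
      using quad_form_complete_square[OF J, of c w] d0 unfolding c'_def by simp
    also have "\<dots> = quad_form c' J v" unfolding Lw qw using d0 by (simp add: w_def)
    finally show "0 < quad_form c' J v" using \<open>0 < quad_form c (insert a J) w\<close> by simp
  qed
qed

lemma quad_form_posdef_nonneg: "quad_form_posdef c I \<Longrightarrow> 0 \<le> quad_form c I v"
proof (cases "\<exists>i\<in>I. v i \<noteq> 0")
  case False
  then have "quad_form c I v = quad_form c I (\<lambda>_. 0)" by (intro quad_form_cong) auto
  then show ?thesis by (simp add: quad_form_def)
qed (auto simp: quad_form_posdef_def less_imp_le)

lemma abs_le_square_plus_one: "\<bar>x::rat\<bar> \<le> x * x + 1"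
proof (cases "\<bar>x\<bar> \<le> 1")
  case True
  have "0 \<le> x * x" by simp
  then show ?thesis using True by linarith
next
  case False
  then have "\<bar>x\<bar> * 1 \<le> \<bar>x\<bar> * \<bar>x\<bar>" by (intro mult_left_mono) auto
  then show ?thesis by (simp add: abs_mult_self_eq)
qed

lemma abs_le_of_square_bound:
  fixes x l d q B :: rat
  assumes d0: "d > 0" and q: "0 \<le> q" and B: "d * ((x + l / (2 * d)) * (x + l / (2 * d))) + q \<le> B"
  shows "\<bar>x\<bar> \<le> B / d + 1 + \<bar>l\<bar> / (2 * d)"
proof -
  define t where "t = x + l / (2 * d)"
  have "d * (t * t) \<le> B" using B q unfolding t_def by linarith
  then have "t * t \<le> B / d" using d0 by (simp add: pos_le_divide_eq mult.commute)
  then have "\<bar>t\<bar> \<le> B / d + 1" using abs_le_square_plus_one[of t] by linarith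
  moreover have "\<bar>x\<bar> \<le> \<bar>t\<bar> + \<bar>l / (2 * d)\<bar>" unfolding t_def by linarith
  moreover have "\<bar>l / (2 * d)\<bar> = \<bar>l\<bar> / (2 * d)" using d0 by (simp add: abs_divide)
  ultimately show ?thesis by linarith
qed

text \<open>Induction on the support: by completing the square, a vector in the sublevel set restricts
  to one in the sublevel set of the eliminated form, and its remaining coordinate is then bounded.\<close>

lemma quad_form_sublevel_finite:
  fixes c :: "'i \<Rightarrow> 'i \<Rightarrow> rat"
  assumes "finite I" and "quad_form_posdef c I"
  shows "finite {v :: 'i \<Rightarrow> int. (\<forall>i. i \<notin> I \<longrightarrow> v i = 0) \<and> quad_form c I (\<lambda>i. of_int (v i)) \<le> B}"
  using assms
proof (induction I arbitrary: c B rule: finite_induct)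
  case empty
  have "{v :: 'i \<Rightarrow> int. (\<forall>i. i \<notin> {} \<longrightarrow> v i = 0) \<and> quad_form c {} (\<lambda>i. of_int (v i)) \<le> B} \<subseteq> {\<lambda>_. 0}"
    by auto
  then show ?case using finite_subset by blast
next
  case (insert a J)
  define d where "d = c a a"
  define L where "L v = (\<Sum>j\<in>J. (c a j + c j a) * v j)" for v :: "'i \<Rightarrow> rat"
  define c' where "c' i j = c i j - (c a i + c i a) * (c a j + c j a) / (4 * d)" for i j
  have d0: "d > 0" and pos': "quad_form_posdef c' J"
    using quad_form_posdef_insert[OF insert.hyps(1,2) insert.prems] unfolding d_def c'_def by auto
  have sq: "quad_form c (insert a J) v = d * ((v a + L v / (2 * d)) * (v a + L v / (2 * d))) + quad_form c' J v" for v
    using quad_form_complete_square[OF insert.hyps(1,2), of c v] d0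
    unfolding d_def L_def c'_def by (simp add: power2_eq_square)
  have LJ: "L (v(a := x)) = L v" for v x unfolding L_def using insert.hyps by (intro sum.cong) auto
  have qJ: "quad_form c' J (v(a := x)) = quad_form c' J v" for v x by (rule quad_form_cong) (use insert.hyps in auto)
  have q'nn: "0 \<le> quad_form c' J v" for v by (rule quad_form_posdef_nonneg[OF pos'])
  define F where "F = {v :: 'i \<Rightarrow> int. (\<forall>i. i \<notin> J \<longrightarrow> v i = 0) \<and> quad_form c' J (\<lambda>i. of_int (v i)) \<le> B}"
  have finF: "finite F" unfolding F_def by (rule insert.IH[OF pos'])
  define M where "M = Max (insert 0 ((\<lambda>w. \<bar>L (\<lambda>i. of_int (w i))\<bar> / (2 * d)) ` F))"
  define K where "K = \<lceil>B / d + 1 + M\<rceil>"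
  have subs: "{v :: 'i \<Rightarrow> int. (\<forall>i. i \<notin> insert a J \<longrightarrow> v i = 0) \<and> quad_form c (insert a J) (\<lambda>i. of_int (v i)) \<le> B}
      \<subseteq> (\<lambda>(w, n). w(a := n)) ` (F \<times> {-K..K})"
  proof
    fix v :: "'i \<Rightarrow> int"
    assume "v \<in> {v. (\<forall>i. i \<notin> insert a J \<longrightarrow> v i = 0) \<and> quad_form c (insert a J) (\<lambda>i. of_int (v i)) \<le> B}"
    then have v0: "\<forall>i. i \<notin> insert a J \<longrightarrow> v i = 0" and vB: "quad_form c (insert a J) (\<lambda>i. of_int (v i)) \<le> B" by auto
    define v' where "v' = v(a := 0)"
    define r where "r = (\<lambda>i. rat_of_int (v i))"
    have r': "(\<lambda>i. rat_of_int (v' i)) = r(a := 0)" unfolding v'_def r_def by auto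
    have Lr: "L (\<lambda>i. rat_of_int (v' i)) = L r" unfolding r' LJ ..
    have qr: "quad_form c' J (\<lambda>i. rat_of_int (v' i)) = quad_form c' J r" unfolding r' qJ ..
    have hB: "d * ((r a + L r / (2 * d)) * (r a + L r / (2 * d))) + quad_form c' J r \<le> B"
      using vB sq[of r] unfolding r_def by simp
    have "0 \<le> d * ((r a + L r / (2 * d)) * (r a + L r / (2 * d)))" using d0 by simp
    then have v'F: "v' \<in> F" unfolding F_def using v0 hB qr by (auto simp: v'_def)
    have "\<bar>L r\<bar> / (2 * d) \<le> M"
    proof -
      have "\<bar>L (\<lambda>i. of_int (v' i))\<bar> / (2 * d) \<in> insert 0 ((\<lambda>w. \<bar>L (\<lambda>i. of_int (w i))\<bar> / (2 * d)) ` F)"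
        using v'F by blast
      then show ?thesis unfolding M_def Lr using finF by (intro Max_ge) auto
    qed
    then have "\<bar>r a\<bar> \<le> B / d + 1 + M" using abs_le_of_square_bound[OF d0 q'nn hB] by linarith
    then have "\<bar>r a\<bar> \<le> of_int K" unfolding K_def by (meson le_of_int_ceiling order_trans)
    then have "v a \<in> {-K..K}" unfolding r_def by (simp add: abs_le_iff)
    moreover have "v = v'(a := v a)" unfolding v'_def by simp
    ultimately have "(v', v a) \<in> F \<times> {-K..K} \<and> v = (\<lambda>(w, n). w(a := n)) (v', v a)" using v'F by simp
    then show "v \<in> (\<lambda>(w, n). w(a := n)) ` (F \<times> {-K..K})" by (intro image_eqI[where x="(v', v a)"]) auto
  qed
  show ?case by (rule finite_subset[OF subs]) (use finF in simp)
qed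


section \<open>The Tits form\<close>

lemma tits_form_unit_vector:
  assumes "finite A" "i \<in> I" "finite I"
  shows "tits_form I A (\<lambda>j. if j = i then 1 else 0) = 1 - (if (i,i) \<in> A then 1 else 0)"
proof -
  have "(\<Sum>k\<in>I. ((if k = i then 1 else 0)::int)^2) = (\<Sum>k\<in>I. (if k = i then 1 else 0))"
    by (rule sum.cong) auto
  then have "(\<Sum>k\<in>I. ((if k = i then 1 else 0)::int)^2) = 1"
    using assms by (simp add: sum.delta)
  moreover have "(\<Sum>(s,t)\<in>A. (if s = i then 1 else 0) * (if t = i then (1::int) else 0))
      = (\<Sum>x\<in>A. if x = (i,i) then 1 else 0)"
    by (rule sum.cong) (auto split: if_splits)
  moreover have "\<dots> = (if (i,i) \<in> A then 1 else 0)" using assms by (simp add: sum.delta)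
  ultimately show ?thesis unfolding tits_form_def by simp
qed

lemma tits_form_pos_no_loop:
  assumes "finite I" "A \<subseteq> I \<times> I" and pos: "\<And>v. (\<exists>i\<in>I. v i \<noteq> 0) \<Longrightarrow> tits_form I A v > 0"
  shows "(i, i) \<notin> A"
proof
  assume a: "(i, i) \<in> A"
  then have i: "i \<in> I" using assms(2) by auto
  then have "tits_form I A (\<lambda>j. if j = i then 1 else 0) > 0" by (intro pos) auto
  moreover have "finite A" using assms(1,2) finite_subset by blast
  ultimately show False using tits_form_unit_vector[OF _ i assms(1)] a by simp
qed

lemma sum_over_relation:
  fixes f :: "'i \<Rightarrow> 'i \<Rightarrow> 'a::comm_monoid_add"
  assumes "finite I" "A \<subseteq> I \<times> I"
  shows "(\<Sum>(s,t)\<in>A. f s t) = (\<Sum>i\<in>I. \<Sum>j\<in>I. if (i,j) \<in> A then f i j else 0)"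
proof -
  have "(\<Sum>i\<in>I. \<Sum>j\<in>I. if (i,j) \<in> A then f i j else 0) = (\<Sum>p\<in>I \<times> I. if p \<in> A then f (fst p) (snd p) else 0)"
    by (simp add: sum.cartesian_product split_def)
  also have "\<dots> = (\<Sum>p\<in>(I \<times> I) \<inter> A. f (fst p) (snd p))"
    using assms by (simp add: sum.inter_restrict)
  also have "(I \<times> I) \<inter> A = A" using assms by auto
  finally show ?thesis by (simp add: split_def)
qed

text \<open>A Dynkin graph is a forest, so heights decreasing by one along every arrow exist.  The
  induction removes a vertex of degree at most one; such a vertex exists because positivity at the
  all-ones vector forces fewer arrows than vertices.\<close>

lemma tits_form_pos_leaf:
  assumes finI: "finite I" and AI: "A \<subseteq> I \<times> I" and "I \<noteq> {}"
    and pos: "\<And>v. (\<exists>i\<in>I. v i \<noteq> 0) \<Longrightarrow> tits_form I A v > 0"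
  shows "\<exists>a\<in>I. card {e \<in> A. fst e = a \<or> snd e = a} \<le> 1"
proof (rule ccontr)
  define deg where "deg i = card {e \<in> A. fst e = i \<or> snd e = i}" for i
  have finA: "finite A" using finI AI finite_subset by blast
  assume none: "\<not> ?thesis"
  have deg2: "2 \<le> deg i" if "i \<in> I" for i
  proof -
    have "\<not> deg i \<le> 1" using none that unfolding deg_def by blast
    then show ?thesis by simp
  qed
  have "tits_form I A (\<lambda>_. 1) > 0" using \<open>I \<noteq> {}\<close> by (intro pos) auto
  then have card_A: "card A < card I" unfolding tits_form_def by simp
  have "(\<Sum>i\<in>I. deg i) = (\<Sum>i\<in>I. \<Sum>e\<in>A. if fst e = i \<or> snd e = i then 1 else 0)"
    unfolding deg_def using finA by (simp add: sum.If_cases Int_def)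
  also have "\<dots> = (\<Sum>e\<in>A. \<Sum>i\<in>I. if fst e = i \<or> snd e = i then 1 else 0)" by (rule sum.swap)
  also have "\<dots> \<le> (\<Sum>e\<in>A. 2)"
  proof (rule sum_mono)
    fix e assume "e \<in> A"
    have "(\<Sum>i\<in>I. if fst e = i \<or> snd e = i then 1 else 0) = card {i\<in>I. fst e = i \<or> snd e = i}"
      using finI by (simp add: sum.If_cases Int_def)
    also have "\<dots> \<le> card {fst e, snd e}" by (rule card_mono) auto
    also have "\<dots> \<le> 2" by (rule card_insert_le_m1) auto
    finally show "(\<Sum>i\<in>I. if fst e = i \<or> snd e = i then 1 else 0) \<le> (2::nat)" .
  qed
  finally have "(\<Sum>i\<in>I. deg i) \<le> 2 * card A" by simp
  moreover have "(\<Sum>i\<in>I. deg i) \<ge> (\<Sum>i\<in>I. 2)" using deg2 by (rule sum_mono)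
  ultimately show False using card_A by simp
qed

lemma tits_form_pos_delete_vertex:
  assumes finI: "finite I" and AI: "A \<subseteq> I \<times> I" and a: "a \<in> I"
    and pos: "\<And>v. (\<exists>i\<in>I. v i \<noteq> 0) \<Longrightarrow> tits_form I A v > 0"
    and v: "\<exists>i\<in>I - {a}. v i \<noteq> 0"
  shows "tits_form (I - {a}) {e \<in> A. fst e \<noteq> a \<and> snd e \<noteq> a} v > 0"
proof -
  define v0 where "v0 = v(a := 0)"
  have finA: "finite A" using finI AI finite_subset by blast
  have "tits_form I A v0 > 0" using v unfolding v0_def by (intro pos) auto
  moreover have "(\<Sum>i\<in>I. (v0 i)^2) = (\<Sum>i\<in>I - {a}. (v i)^2)"
  proof -
    have "(\<Sum>i\<in>I. (v0 i)^2) = (v0 a)^2 + (\<Sum>i\<in>I - {a}. (v0 i)^2)" using a finI by (simp add: sum.remove)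
    also have "(\<Sum>i\<in>I - {a}. (v0 i)^2) = (\<Sum>i\<in>I - {a}. (v i)^2)" unfolding v0_def by (intro sum.cong) auto
    finally show ?thesis unfolding v0_def by simp
  qed
  moreover have "(\<Sum>(s,t)\<in>A. v0 s * v0 t) = (\<Sum>(s,t)\<in>{e \<in> A. fst e \<noteq> a \<and> snd e \<noteq> a}. v s * v t)"
  proof -
    have "(\<Sum>(s,t)\<in>A. v0 s * v0 t) = (\<Sum>(s,t)\<in>{e \<in> A. fst e \<noteq> a \<and> snd e \<noteq> a}. v0 s * v0 t)"
      by (rule sum.mono_neutral_right) (use finA in \<open>auto simp: v0_def\<close>)
    also have "\<dots> = (\<Sum>(s,t)\<in>{e \<in> A. fst e \<noteq> a \<and> snd e \<noteq> a}. v s * v t)"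
      by (rule sum.cong) (auto simp: v0_def)
    finally show ?thesis .
  qed
  ultimately show ?thesis unfolding tits_form_def by simp
qed

lemma potential_extend_leaf:
  fixes p :: "'i \<Rightarrow> int"
  assumes p: "\<forall>(s,t)\<in>{e \<in> A. fst e \<noteq> a \<and> snd e \<noteq> a}. p s - p t = 1"
    and deg: "card {e \<in> A. fst e = a \<or> snd e = a} \<le> 1" and fin: "finite A" and loop: "(a, a) \<notin> A"
  shows "\<exists>p' :: 'i \<Rightarrow> int. \<forall>(s,t)\<in>A. p' s - p' t = 1"
proof -
  let ?T = "{e \<in> A. fst e = a \<or> snd e = a}"
  have away: "p s - p t = 1" if "(s, t) \<in> A" "s \<noteq> a" "t \<noteq> a" for s t
    using bspec[OF p, of "(s, t)"] that by simp
  show ?thesis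
  proof (cases "card ?T = 0")
    case True
    then have "?T = {}" using fin by simp
    then have "p s - p t = 1" if "(s, t) \<in> A" for s t
      using that away[OF that] by auto
    then show ?thesis by blast
  next
    case False
    then have "card ?T = 1" using deg by linarith
    then obtain e where e: "?T = {e}" by (rule card_1_singletonE)
    obtain s0 t0 where e_st: "e = (s0, t0)" by (cases e)
    have "(s0, t0) \<in> ?T" using e e_st by simp
    then have st0: "(s0, t0) \<in> A" "s0 = a \<or> t0 = a" by simp_all
    then have "s0 \<noteq> t0" using loop by auto
    define p' where "p' = p(a := if s0 = a then p t0 + 1 else p s0 - 1)"
    have "p' s - p' t = 1" if st: "(s, t) \<in> A" for s t
    proof (cases "(s, t) \<in> ?T")
      case True
      then have "(s, t) = (s0, t0)" using e e_st by simp
      then show ?thesis using st0 \<open>s0 \<noteq> t0\<close> unfolding p'_def by auto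
    next
      case False
      then have "s \<noteq> a" "t \<noteq> a" using st by simp_all
      then show ?thesis using away[OF st] unfolding p'_def by simp
    qed
    then show ?thesis by blast
  qed
qed

lemma tits_form_pos_potential:
  fixes I :: "'i set" and A :: "('i \<times> 'i) set"
  assumes "finite I" "A \<subseteq> I \<times> I" "\<And>v. (\<exists>i\<in>I. v i \<noteq> 0) \<Longrightarrow> tits_form I A v > 0"
  shows "\<exists>p :: 'i \<Rightarrow> int. \<forall>(s,t)\<in>A. p s - p t = 1"
  using assms
proof (induction "card I" arbitrary: I A rule: less_induct)
  case less
  note finI = less.prems(1) and AI = less.prems(2) and pos = less.prems(3)
  show ?case
  proof (cases "I = {}")
    case True
    then show ?thesis using AI by auto
  next
    case False
    then obtain a where a: "a \<in> I" and deg: "card {e \<in> A. fst e = a \<or> snd e = a} \<le> 1"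
      using tits_form_pos_leaf[OF finI AI _ pos] by blast
    have card: "card (I - {a}) < card I" using a finI by (meson card_Diff1_less)
    have sub: "{e \<in> A. fst e \<noteq> a \<and> snd e \<noteq> a} \<subseteq> (I - {a}) \<times> (I - {a})" using AI by auto
    have "\<exists>p :: 'i \<Rightarrow> int. \<forall>(s,t)\<in>{e \<in> A. fst e \<noteq> a \<and> snd e \<noteq> a}. p s - p t = 1"
      by (rule less.hyps[OF card _ sub tits_form_pos_delete_vertex[OF finI AI a pos]]) (use finI in simp)
    then obtain p :: "'i \<Rightarrow> int" where p: "\<forall>(s,t)\<in>{e \<in> A. fst e \<noteq> a \<and> snd e \<noteq> a}. p s - p t = 1"
      by blast
    have "finite A" using finI AI finite_subset by blast
    then show ?thesis
      by (rule potential_extend_leaf[OF p deg _ tits_form_pos_no_loop[OF finI AI pos]])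
  qed
qed

definition neighbors :: "('i \<times> 'i) set \<Rightarrow> 'i \<Rightarrow> 'i set" where
  "neighbors A i = {j. (i, j) \<in> A \<or> (j, i) \<in> A}"

locale dynkin_repetition =
  fixes I :: "'i set" and A :: "('i \<times> 'i) set" and par :: "'i \<Rightarrow> bool"
  assumes dynkin: "dynkin_quiver I A" and alternating: "alternating A par"
begin

abbreviation "V \<equiv> zq_V I par"
abbreviation "preds \<equiv> zq_preds I A par"
abbreviation "succs \<equiv> zq_succs I A par"
abbreviation "arr \<equiv> zq_arr I A par"
abbreviation "tits \<equiv> tits_form I A"
abbreviation "nb \<equiv> neighbors A"

lemma finite_I: "finite I" and A_subset: "A \<subseteq> I \<times> I"
  and connected: "\<And>i j. i \<in> I \<Longrightarrow> j \<in> I \<Longrightarrow> (i, j) \<in> (A \<union> A\<inverse>)\<^sup>*"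
  and tits_pos: "\<And>v. (\<exists>i\<in>I. v i \<noteq> 0) \<Longrightarrow> tits v > 0"
  using dynkin unfolding dynkin_quiver_def by auto

lemma finite_A: "finite A" using finite_I A_subset finite_subset by blast

lemma tits_ge_1: "(\<exists>i\<in>I. v i \<noteq> 0) \<Longrightarrow> tits v \<ge> 1" using tits_pos by force

lemma no_loop: "(i, i) \<notin> A"
  by (rule tits_form_pos_no_loop[OF finite_I A_subset tits_pos])

lemma no_2cycle: assumes "(i, j) \<in> A" shows "(j, i) \<notin> A"
proof
  assume b: "(j,i) \<in> A"
  have ij: "i \<noteq> j" using assms no_loop by auto
  have iI: "i \<in> I" and jI: "j \<in> I" using assms A_subset by auto
  define v :: "'i \<Rightarrow> int" where "v = (\<lambda>k. if k = i \<or> k = j then 1 else 0)"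
  have "tits v > 0" using iI by (intro tits_pos) (auto simp: v_def)
  moreover have "(\<Sum>k\<in>I. (v k)^2) = 2"
  proof -
    have "(\<Sum>k\<in>I. (v k)^2) = (\<Sum>k\<in>I. (if k \<in> {i,j} then 1 else 0))"
      by (rule sum.cong) (auto simp: v_def)
    also have "\<dots> = int (card (I \<inter> {i,j}))" by (simp add: sum.If_cases finite_I Int_def)
    also have "I \<inter> {i,j} = {i,j}" using iI jI by auto
    finally show ?thesis using ij by simp
  qed
  moreover have "(\<Sum>(s,t)\<in>A. v s * v t) \<ge> 2"
  proof -
    have "(\<Sum>(s,t)\<in>{(i,j),(j,i)}. v s * v t) \<le> (\<Sum>(s,t)\<in>A. v s * v t)"
      using assms b finite_A by (intro sum_mono2) (auto simp: v_def)
    moreover have "(\<Sum>(s,t)\<in>{(i,j),(j,i)}. v s * v t) = 2" using ij by (simp add: v_def)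
    ultimately show ?thesis by simp
  qed
  ultimately show False unfolding tits_form_def by simp
qed

lemma arrow_parity: "(s,t) \<in> A \<Longrightarrow> par s \<noteq> par t" using alternating unfolding alternating_def by auto

lemma nb_subset: "nb i \<subseteq> I" using A_subset unfolding neighbors_def by auto
lemma finite_nb: "finite (nb i)" using nb_subset finite_I finite_subset by blast
lemma nb_sym: "j \<in> nb i \<longleftrightarrow> i \<in> nb j" unfolding neighbors_def by auto
lemma nb_parity: "j \<in> nb i \<Longrightarrow> par j \<noteq> par i" using arrow_parity unfolding neighbors_def by fastforce

lemma V_iff: "(i, q) \<in> V \<longleftrightarrow> i \<in> I \<and> (even q \<longleftrightarrow> par i)" unfolding zq_V_def by auto
lemma in_V_iff: "v \<in> V \<longleftrightarrow> fst v \<in> I \<and> (even (snd v) \<longleftrightarrow> par (fst v))"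
  using V_iff[of "fst v" "snd v"] by simp

lemma V_tau: "tau v \<in> V \<longleftrightarrow> v \<in> V" "tau_inv v \<in> V \<longleftrightarrow> v \<in> V" "mirror v \<in> V \<longleftrightarrow> v \<in> V"
  unfolding in_V_iff by auto

lemma V_neighbor: "(i, q) \<in> V \<Longrightarrow> j \<in> nb i \<Longrightarrow> (j, q + 1) \<in> V \<and> (j, q - 1) \<in> V"
  using nb_parity[of j i] nb_subset unfolding V_iff by auto

lemma arr_iff: "arr x y \<longleftrightarrow> x \<in> V \<and> y \<in> V \<and> snd y = snd x + 1 \<and> fst x \<in> nb (fst y)"
  unfolding zq_arr_def neighbors_def by auto

lemma preds_eq: "y \<in> V \<Longrightarrow> preds y = (\<lambda>j. (j, snd y - 1)) ` nb (fst y)"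
  unfolding zq_preds_def arr_iff
  using V_neighbor[of "fst y" "snd y"] by (auto simp: image_iff)

lemma succs_eq: "x \<in> V \<Longrightarrow> succs x = (\<lambda>j. (j, snd x + 1)) ` nb (fst x)"
  unfolding zq_succs_def arr_iff
  using V_neighbor[of "fst x" "snd x"] by (auto simp: image_iff nb_sym)

lemma preds_nonV: "y \<notin> V \<Longrightarrow> preds y = {}" unfolding zq_preds_def arr_iff by auto
lemma succs_nonV: "x \<notin> V \<Longrightarrow> succs x = {}" unfolding zq_succs_def arr_iff by auto

lemma finite_preds: "finite (preds y)"
  by (cases "y \<in> V") (simp_all add: preds_eq finite_nb preds_nonV)
lemma finite_succs: "finite (succs y)"
  by (cases "y \<in> V") (simp_all add: succs_eq finite_nb succs_nonV)

lemma sum_preds: "y \<in> V \<Longrightarrow> (\<Sum>w\<in>preds y. f w) = (\<Sum>j\<in>nb (fst y). f (j, snd y - 1))"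
  by (simp add: preds_eq sum.reindex inj_on_def)

lemma preds_layer: "w \<in> preds y \<Longrightarrow> snd w = snd y - 1 \<and> w \<in> V"
  unfolding zq_preds_def arr_iff by auto
lemma succs_layer: "w \<in> succs y \<Longrightarrow> snd w = snd y + 1 \<and> w \<in> V"
  unfolding zq_succs_def arr_iff by auto

lemma preds_tau_inv: "preds (tau_inv a) = succs a"
proof (cases "a \<in> V")
  case True
  then have "tau_inv a \<in> V" using V_tau by simp
  then show ?thesis using True by (auto simp: preds_eq succs_eq)
next
  case False
  then show ?thesis using V_tau preds_nonV succs_nonV by simp
qed

lemma preds_mirror: "preds (mirror a) = mirror ` succs a"
proof (cases "a \<in> V")
  case True
  then have "mirror a \<in> V" using V_tau by simp
  then show ?thesis using True by (auto simp: preds_eq succs_eq mirror_def image_iff)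
next
  case False
  then show ?thesis using V_tau preds_nonV succs_nonV by simp
qed

lemma succs_iff_preds: "b \<in> succs a \<longleftrightarrow> a \<in> preds b"
  unfolding zq_succs_def zq_preds_def by simp

end

section \<open>Knitting in ZQ\<close>

text \<open>The knitting of \<open>hom_dim\<close> with the clamp \<open>max 0\<close> replaced by an arbitrary \<open>cl\<close>; for
  \<open>cl = (\<lambda>a. a)\<close> it yields the additive function \<open>h\<^sub>x\<close> of the paper.\<close>

fun knit_with :: "(int \<Rightarrow> int) \<Rightarrow> 'i set \<Rightarrow> ('i \<times> 'i) set \<Rightarrow> ('i \<Rightarrow> bool) \<Rightarrow> 'i \<times> int \<Rightarrow> nat \<Rightarrow> 'i \<Rightarrow> int" where
  "knit_with cl I A par x 0 = (\<lambda>i. if i = fst x then 1 else 0)"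
| "knit_with cl I A par x (Suc 0) =
     (\<lambda>i. cl (\<Sum>j\<in>{j. zq_arr I A par (j, snd x) (i, snd x + 1)}. knit_with cl I A par x 0 j))"
| "knit_with cl I A par x (Suc (Suc k)) =
     (\<lambda>i. cl ((\<Sum>j\<in>{j. zq_arr I A par (j, snd x + int k + 1) (i, snd x + int k + 2)}. knit_with cl I A par x (Suc k) j) - knit_with cl I A par x k i))"

lemma knit_eq_knit_with: "knit I A par x k = knit_with (max 0) I A par x k"
  by (induction I A par x k rule: knit.induct) (simp_all add: Let_def)

definition hom_with :: "(int \<Rightarrow> int) \<Rightarrow> 'i set \<Rightarrow> ('i \<times> 'i) set \<Rightarrow> ('i \<Rightarrow> bool) \<Rightarrow> 'i \<times> int \<Rightarrow> 'i \<times> int \<Rightarrow> int" where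
  "hom_with cl I A par z v = (if snd v < snd z then 0 else knit_with cl I A par z (nat (snd v - snd z)) (fst v))"

lemma hom_dim_eq_hom_with: "hom_dim I A par = hom_with (max 0) I A par"
  by (intro ext) (simp add: hom_dim_def hom_with_def knit_eq_knit_with)

context dynkin_repetition
begin

abbreviation "hw cl \<equiv> hom_with cl I A par"

lemma knit_with_outside_V:
  assumes cl0: "cl 0 = 0" and z: "z \<in> V"
  shows "(i, snd z + int k) \<notin> V \<Longrightarrow> knit_with cl I A par z k i = 0"
proof (induction k arbitrary: i rule: less_induct)
  case (less k)
  show ?case
  proof (cases k)
    case 0
    then have "i \<noteq> fst z" using less.prems z by (cases z) auto
    then show ?thesis using 0 by simp
  next
    case (Suc k1)
    show ?thesis
    proof (cases k1)
      case 0
      have "{j. arr (j, snd z) (i, snd z + 1)} = {}" using less.prems Suc 0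
        by (auto simp: arr_iff)
      then show ?thesis using Suc 0 cl0 by simp
    next
      case (Suc k2)
      have "(i, snd z + int k2 + 2) \<notin> V" using less.prems \<open>k = Suc k1\<close> Suc
        by (simp add: algebra_simps)
      then have e: "{j. arr (j, snd z + int k2 + 1) (i, snd z + int k2 + 2)} = {}"
        by (auto simp: arr_iff)
      have "(i, snd z + int k2) \<notin> V" using less.prems \<open>k = Suc k1\<close> Suc
        by (auto simp: V_iff even_add)
      then have "knit_with cl I A par z k2 i = 0" using less.IH \<open>k = Suc k1\<close> Suc by simp
      then show ?thesis using \<open>k = Suc k1\<close> Suc e cl0 by simp
    qed
  qed
qed

lemma sum_preds_any: "(\<Sum>w\<in>preds v. f w) = (\<Sum>j\<in>{j. arr (j, snd v - 1) v}. f (j, snd v - 1))"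
proof -
  have "preds v = (\<lambda>j. (j, snd v - 1)) ` {j. arr (j, snd v - 1) v}"
    unfolding zq_preds_def arr_iff by (auto simp: image_iff)
  then show ?thesis by (simp add: sum.reindex inj_on_def)
qed

lemma hom_with_rec:
  assumes cl0: "cl 0 = 0" and z: "z \<in> V"
  shows "hw cl z v = (if v \<notin> V \<or> snd v < snd z then 0 else if v = z then 1
            else cl ((\<Sum>w\<in>preds v. hw cl z w) - hw cl z (tau v)))"
proof (cases "snd v < snd z")
  case True then show ?thesis by (simp add: hom_with_def)
next
  case False
  obtain k where k: "snd v = snd z + int k" using False by (metis add.commute le_add_diff_inverse2 nonneg_int_cases not_less diff_ge_0_iff_ge)
  obtain i where i: "fst v = i" by simp
  have vv: "v = (i, snd z + int k)" using i k by (simp add: prod_eq_iff)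
  have hk: "hw cl z v = knit_with cl I A par z k i" using k i by (simp add: hom_with_def)
  show ?thesis
  proof (cases "v \<in> V")
    case False
    then show ?thesis using hk knit_with_outside_V[where cl=cl, OF cl0 z, of i k] vv by simp
  next
    case vV: True
    have low: "hw cl z w = 0" if "snd w < snd z" for w using that by (simp add: hom_with_def)
    show ?thesis
    proof (cases k)
      case 0
      show ?thesis
      proof (cases "v = z")
        case True then show ?thesis using hk 0 vv z by (simp add: hom_with_def)
      next
        case False
        then have "i \<noteq> fst z" using vv 0 by (cases z) auto
        moreover have "(\<Sum>w\<in>preds v. hw cl z w) = 0"
        proof (rule sum.neutral, intro ballI)
          fix w assume "w \<in> preds v"
          then have "snd w < snd z" using preds_layer[of w v] k 0 by simp
          then show "hw cl z w = 0" by (rule low)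
        qed
        moreover have "hw cl z (tau v) = 0" using low k 0 by simp
        ultimately show ?thesis using hk 0 vV False cl0 by simp
      qed
    next
      case (Suc k1)
      have vz: "v \<noteq> z" using k Suc by auto
      have sp: "(\<Sum>w\<in>preds v. hw cl z w) = (\<Sum>j\<in>{j. arr (j, snd z + int k1) (i, snd z + int k1 + 1)}. knit_with cl I A par z k1 j)"
        unfolding sum_preds_any using k Suc vv
        by (intro sum.cong) (auto simp: hom_with_def algebra_simps)
      show ?thesis
      proof (cases k1)
        case 0
        have "hw cl z (tau v) = 0" using low k Suc 0 by simp
        then show ?thesis using hk Suc 0 vV vz sp False by simp
      next
        case (Suc k2)
        have "hw cl z (tau v) = knit_with cl I A par z k2 i" using k \<open>k = Suc k1\<close> Suc vv
          by (simp add: hom_with_def)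
        moreover have "{j. arr (j, snd z + int k1) (i, snd z + int k1 + 1)}
            = {j. arr (j, snd z + int k2 + 1) (i, snd z + int k2 + 2)}" using Suc by (simp add: algebra_simps)
        ultimately show ?thesis using hk \<open>k = Suc k1\<close> Suc vV vz sp False by simp
      qed
    qed
  qed
qed

lemma hom_with_unique:
  assumes cl0: "cl 0 = 0" and z: "z \<in> V"
    and f: "\<And>v. f v = (if v \<notin> V \<or> snd v < snd z then 0 else if v = z then 1
            else cl ((\<Sum>w\<in>preds v. f w) - f (tau v)))"
  shows "f v = hw cl z v"
proof (induction v rule: layer_induct[where L="snd z"])
  case (1 v)
  then show ?case using f[of v] hom_with_rec[where cl=cl, OF cl0 z, of v] by simp
next
  case (2 v)
  have "(\<Sum>w\<in>preds v. f w) = (\<Sum>w\<in>preds v. hw cl z w)"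
    by (rule sum.cong) (use 2 preds_layer in auto)
  moreover have "f (tau v) = hw cl z (tau v)" using 2 by simp
  ultimately show ?case using f[of v] hom_with_rec[where cl=cl, OF cl0 z, of v] by simp
qed

lemma preds_tau_inv_image: "preds (tau_inv v) = tau_inv ` preds v"
proof (cases "v \<in> V")
  case True
  then have "tau_inv v \<in> V" using V_tau by simp
  then show ?thesis using True by (auto simp: preds_eq image_iff tau_inv_def)
next
  case False
  then show ?thesis using V_tau preds_nonV by simp
qed

lemma hom_with_tau_inv:
  assumes cl0: "cl 0 = 0" and z: "z \<in> V"
  shows "hw cl (tau_inv z) (tau_inv v) = hw cl z v"
proof -
  have z': "tau_inv z \<in> V" using z V_tau by simp
  define f where "f v = hw cl (tau_inv z) (tau_inv v)" for v
  have "f v = hw cl z v" for v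
  proof (rule hom_with_unique[where cl=cl, OF cl0 z])
    fix v
    have "(\<Sum>w\<in>preds (tau_inv v). hw cl (tau_inv z) w) = (\<Sum>w\<in>preds v. f w)"
      unfolding preds_tau_inv_image f_def by (simp add: sum.reindex inj_on_def tau_inv_eq_iff)
    moreover have "tau (tau_inv v) = tau_inv (tau v)" by (simp add: tau_def tau_inv_def)
    ultimately show "f v = (if v \<notin> V \<or> snd v < snd z then 0 else if v = z then 1
            else cl ((\<Sum>w\<in>preds v. f w) - f (tau v)))"
      unfolding f_def using hom_with_rec[where cl=cl, OF cl0 z', of "tau_inv v"] by (simp add: V_tau tau_inv_eq_iff)
  qed
  then show ?thesis unfolding f_def .
qed

lemma hom_with_tau_inv_tau: "cl 0 = 0 \<Longrightarrow> z \<in> V \<Longrightarrow> hw cl (tau_inv z) v = hw cl z (tau v)"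
  using hom_with_tau_inv[of cl z "tau v"] by simp

lemma hom_with_outside_V: "cl 0 = 0 \<Longrightarrow> z \<in> V \<Longrightarrow> v \<notin> V \<Longrightarrow> hw cl z v = 0"
  using hom_with_rec by simp
lemma hom_with_below: "snd v < snd z \<Longrightarrow> hw cl z v = 0" by (simp add: hom_with_def)
lemma hom_with_self: "cl 0 = 0 \<Longrightarrow> z \<in> V \<Longrightarrow> hw cl z z = 1" using hom_with_rec[of cl z z] by simp
lemma hom_with_same_layer: "cl 0 = 0 \<Longrightarrow> z \<in> V \<Longrightarrow> snd v = snd z \<Longrightarrow> hw cl z v = (if v = z then 1 else 0)"
proof -
  assume a: "cl 0 = 0" "z \<in> V" "snd v = snd z"
  have "(\<Sum>w\<in>preds v. hw cl z w) = 0"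
  proof (rule sum.neutral, intro ballI)
    fix w assume "w \<in> preds v"
    then have "snd w < snd z" using preds_layer[of w v] a by simp
    then show "hw cl z w = 0" by (rule hom_with_below)
  qed
  moreover have "hw cl z (tau v) = 0" using a hom_with_below by simp
  ultimately show ?thesis using hom_with_rec[where cl=cl, OF a(1,2), of v] a by (auto simp: hom_with_outside_V)
qed

section \<open>Reflections at the layers of ZQ\<close>

text \<open>\<open>reflect E\<close> applies the simple reflection \<open>r \<mapsto> r - (2 r\<^sub>i - \<Sum>\<^sub>j\<^sub>\<in>\<^sub>n\<^sub>b \<^sub>i r\<^sub>j) e\<^sub>i\<close> at every
  \<open>i \<in> E\<close>; on a layer these commute, its vertices being pairwise non-adjacent.\<close>

definition nb_sum :: "('i \<Rightarrow> int) \<Rightarrow> 'i \<Rightarrow> int" where "nb_sum r i = (\<Sum>j\<in>nb i. r j)"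
definition reflect :: "'i set \<Rightarrow> ('i \<Rightarrow> int) \<Rightarrow> 'i \<Rightarrow> int" where
  "reflect E r = (\<lambda>i. if i \<in> E then nb_sum r i - r i else r i)"
definition layer :: "int \<Rightarrow> 'i set" where "layer q = {i \<in> I. (even q \<longleftrightarrow> par i)}"

lemma layer_iff_V: "i \<in> layer q \<longleftrightarrow> (i, q) \<in> V" unfolding layer_def V_iff by simp
lemma layer_subset: "layer q \<subseteq> I" unfolding layer_def by auto
lemma layer_succ: "i \<in> layer (q + 1) \<longleftrightarrow> i \<in> I \<and> i \<notin> layer q" unfolding layer_def by auto
lemma layer_shift: "layer (q + 2) = layer q" "layer (q - 2) = layer q" "layer (q - 1) = layer (q + 1)"
  unfolding layer_def by (auto simp: even_add)
lemma layer_nb: "i \<in> layer q \<Longrightarrow> j \<in> nb i \<Longrightarrow> j \<notin> layer q"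
  using nb_parity[of j i] unfolding layer_def by auto

lemma sum_over_A: "(\<Sum>(s,t)\<in>A. f s t) = (\<Sum>i\<in>I. \<Sum>j\<in>I. if (i,j) \<in> A then f i j else 0)"
  by (rule sum_over_relation[OF finite_I A_subset])

lemma sum_nb_split: "(\<Sum>j\<in>nb i. g j) = (\<Sum>j\<in>I. if (i,j) \<in> A then g j else 0) + (\<Sum>j\<in>I. if (j,i) \<in> A then g j else (0::int))"
proof -
  have e: "nb i = {j\<in>I. (i,j) \<in> A} \<union> {j\<in>I. (j,i) \<in> A}" unfolding neighbors_def using A_subset by auto
  have d: "{j\<in>I. (i,j) \<in> A} \<inter> {j\<in>I. (j,i) \<in> A} = {}" using no_2cycle by auto
  have "(\<Sum>j\<in>nb i. g j) = (\<Sum>j\<in>{j\<in>I. (i,j) \<in> A}. g j) + (\<Sum>j\<in>{j\<in>I. (j,i) \<in> A}. g j)"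
    unfolding e using d finite_I by (intro sum.union_disjoint) auto
  then show ?thesis using finite_I by (simp add: sum.inter_filter)
qed

lemma sum_arrows_layer: "(\<Sum>(s,t)\<in>A. r s * r t) = (\<Sum>i\<in>layer q. r i * nb_sum r i)"
proof -
  let ?E = "layer q"
  have ex: "(i,j) \<in> A \<Longrightarrow> (if i \<in> ?E then 1 else 0) + (if j \<in> ?E then 1 else 0) = (1::int)" for i j
    using arrow_parity[of i j] A_subset unfolding layer_def by auto
  have "(\<Sum>(s,t)\<in>A. r s * r t) = (\<Sum>i\<in>I. \<Sum>j\<in>I. if (i,j) \<in> A then r i * r j else 0)" by (rule sum_over_A)
  also have "\<dots> = (\<Sum>i\<in>I. \<Sum>j\<in>I. (if (i,j) \<in> A \<and> i \<in> ?E then r i * r j else 0) + (if (i,j) \<in> A \<and> j \<in> ?E then r i * r j else 0))"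
  proof (intro sum.cong refl)
    fix i j assume "i \<in> I" "j \<in> I"
    show "(if (i,j) \<in> A then r i * r j else 0) = (if (i,j) \<in> A \<and> i \<in> ?E then r i * r j else 0) + (if (i,j) \<in> A \<and> j \<in> ?E then r i * r j else 0)"
      using ex[of i j] by (cases "(i,j) \<in> A"; cases "i \<in> ?E"; cases "j \<in> ?E") auto
  qed
  also have "\<dots> = (\<Sum>i\<in>I. \<Sum>j\<in>I. if (i,j) \<in> A \<and> i \<in> ?E then r i * r j else 0) + (\<Sum>i\<in>I. \<Sum>j\<in>I. if (i,j) \<in> A \<and> j \<in> ?E then r i * r j else 0)"
    by (simp add: sum.distrib)
  also have "(\<Sum>i\<in>I. \<Sum>j\<in>I. if (i,j) \<in> A \<and> j \<in> ?E then r i * r j else 0) = (\<Sum>j\<in>I. \<Sum>i\<in>I. if (i,j) \<in> A \<and> j \<in> ?E then r i * r j else 0)"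
    by (rule sum.swap)
  also have "(\<Sum>i\<in>I. \<Sum>j\<in>I. if (i,j) \<in> A \<and> i \<in> ?E then r i * r j else 0) + (\<Sum>j\<in>I. \<Sum>i\<in>I. if (i,j) \<in> A \<and> j \<in> ?E then r i * r j else 0)
     = (\<Sum>i\<in>I. if i \<in> ?E then r i * nb_sum r i else 0)"
  proof -
    have "(\<Sum>i\<in>I. if i \<in> ?E then r i * nb_sum r i else 0) = (\<Sum>i\<in>I. (\<Sum>j\<in>I. if (i,j) \<in> A \<and> i \<in> ?E then r i * r j else 0) + (\<Sum>j\<in>I. if (j,i) \<in> A \<and> i \<in> ?E then r j * r i else 0))"
    proof (intro sum.cong refl)
      fix i assume "i \<in> I"
      show "(if i \<in> ?E then r i * nb_sum r i else 0) = (\<Sum>j\<in>I. if (i,j) \<in> A \<and> i \<in> ?E then r i * r j else 0) + (\<Sum>j\<in>I. if (j,i) \<in> A \<and> i \<in> ?E then r j * r i else 0)"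
      proof (cases "i \<in> ?E")
        case True
        have "r i * ((\<Sum>j\<in>I. if (i, j) \<in> A then r j else 0) + (\<Sum>j\<in>I. if (j, i) \<in> A then r j else 0))
          = (\<Sum>j\<in>I. r i * (if (i, j) \<in> A then r j else 0)) + (\<Sum>j\<in>I. r i * (if (j, i) \<in> A then r j else 0))"
          by (simp add: sum_distrib_left distrib_left)
        also have "\<dots> = (\<Sum>j\<in>I. if (i,j) \<in> A \<and> i \<in> ?E then r i * r j else 0) + (\<Sum>j\<in>I. if (j,i) \<in> A \<and> i \<in> ?E then r j * r i else 0)"
          using True by (intro arg_cong2[where f="(+)"] sum.cong refl) (auto simp: mult.commute)
        finally show ?thesis unfolding nb_sum_def sum_nb_split using True by simp
      qed simp
    qed
    then show ?thesis by (simp add: sum.distrib)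
  qed
  also have "\<dots> = (\<Sum>i\<in>?E. r i * nb_sum r i)" using layer_subset finite_I by (simp add: sum.inter_restrict[symmetric] Int_absorb1)
  finally show ?thesis .
qed

lemma tits_form_layer: "tits r = (\<Sum>i\<in>I. (r i)^2) - (\<Sum>i\<in>layer q. r i * nb_sum r i)"
  unfolding tits_form_def by (subst sum_arrows_layer[of r q]) (rule refl)

lemma nb_sum_reflect: assumes "i \<in> layer q" shows "nb_sum (reflect (layer q) r) i = nb_sum r i"
  unfolding nb_sum_def
proof (rule sum.cong[OF refl])
  fix j assume "j \<in> nb i"
  then have "j \<notin> layer q" using layer_nb[OF assms] by blast
  then show "reflect (layer q) r j = r j" unfolding reflect_def by simp
qed

lemma reflect_involution: "reflect (layer q) (reflect (layer q) r) = r"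
proof (rule ext)
  fix i show "reflect (layer q) (reflect (layer q) r) i = r i"
  proof (cases "i \<in> layer q")
    case True
    have "reflect (layer q) (reflect (layer q) r) i = nb_sum (reflect (layer q) r) i - reflect (layer q) r i"
      using True unfolding reflect_def[of "layer q" "reflect (layer q) r"] by simp
    also have "\<dots> = nb_sum r i - (nb_sum r i - r i)"
    proof -
      have "reflect (layer q) r i = nb_sum r i - r i" using True by (simp add: reflect_def)
      then show ?thesis using nb_sum_reflect[OF True, of r] by simp
    qed
    finally show ?thesis by simp
  next
    case False then show ?thesis unfolding reflect_def by simp
  qed
qed

lemma tits_form_reflect: "tits (reflect (layer q) r) = tits r"
proof -
  let ?E = "layer q"
  have s1: "(\<Sum>i\<in>I. (reflect ?E r i)^2) = (\<Sum>i\<in>I - ?E. (r i)^2) + (\<Sum>i\<in>?E. (nb_sum r i - r i)^2)"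
  proof -
    have "(\<Sum>i\<in>I. (reflect ?E r i)^2) = (\<Sum>i\<in>I - ?E. (reflect ?E r i)^2) + (\<Sum>i\<in>?E. (reflect ?E r i)^2)"
      by (rule sum.subset_diff[OF layer_subset finite_I])
    also have "(\<Sum>i\<in>I - ?E. (reflect ?E r i)^2) = (\<Sum>i\<in>I - ?E. (r i)^2)"
      by (rule sum.cong) (auto simp: reflect_def)
    also have "(\<Sum>i\<in>?E. (reflect ?E r i)^2) = (\<Sum>i\<in>?E. (nb_sum r i - r i)^2)"
      by (rule sum.cong) (auto simp: reflect_def)
    finally show ?thesis .
  qed
  have s2: "(\<Sum>i\<in>I. (r i)^2) = (\<Sum>i\<in>I - ?E. (r i)^2) + (\<Sum>i\<in>?E. (r i)^2)"
    by (rule sum.subset_diff[OF layer_subset finite_I])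
  have s3: "(\<Sum>i\<in>?E. reflect ?E r i * nb_sum (reflect ?E r) i) = (\<Sum>i\<in>?E. (nb_sum r i - r i) * nb_sum r i)"
  proof (rule sum.cong[OF refl])
    fix i assume i: "i \<in> ?E"
    show "reflect ?E r i * nb_sum (reflect ?E r) i = (nb_sum r i - r i) * nb_sum r i"
      unfolding nb_sum_reflect[OF i] using i by (simp add: reflect_def)
  qed
  have s4: "(\<Sum>i\<in>?E. (nb_sum r i - r i)^2) - (\<Sum>i\<in>?E. (nb_sum r i - r i) * nb_sum r i) = (\<Sum>i\<in>?E. (r i)^2) - (\<Sum>i\<in>?E. r i * nb_sum r i)"
  proof -
    have "(nb_sum r i - r i)^2 - (nb_sum r i - r i) * nb_sum r i = (r i)^2 - r i * nb_sum r i" for i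
      by (simp add: power2_eq_square algebra_simps)
    then show ?thesis by (simp add: sum_subtractf[symmetric])
  qed
  have "tits (reflect ?E r) = (\<Sum>i\<in>I. (reflect ?E r i)^2) - (\<Sum>i\<in>?E. reflect ?E r i * nb_sum (reflect ?E r) i)" by (rule tits_form_layer)
  also have "\<dots> = (\<Sum>i\<in>I - ?E. (r i)^2) + ((\<Sum>i\<in>?E. (nb_sum r i - r i)^2) - (\<Sum>i\<in>?E. (nb_sum r i - r i) * nb_sum r i))"
    unfolding s1 s3 by simp
  also have "\<dots> = (\<Sum>i\<in>I - ?E. (r i)^2) + ((\<Sum>i\<in>?E. (r i)^2) - (\<Sum>i\<in>?E. r i * nb_sum r i))" unfolding s4 ..
  also have "\<dots> = tits r" unfolding tits_form_layer[of r q] s2 by simp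
  finally show ?thesis .
qed

lemma reflect_sum: "reflect E (\<lambda>i. \<Sum>t\<in>T. f t i) = (\<lambda>i. \<Sum>t\<in>T. reflect E (f t) i)"
  unfolding reflect_def nb_sum_def by (rule ext) (auto simp: sum.swap[of _ T] sum_subtractf)

lemma root_sign_coherent:
  assumes t: "tits v = 1" and off: "\<And>i. i \<notin> I \<Longrightarrow> v i = 0"
  shows "(\<forall>i. v i \<ge> 0) \<or> (\<forall>i. v i \<le> 0)"
proof -
  define a where "a i = max (v i) 0" for i
  define b where "b i = max (- v i) 0" for i
  have vab: "v i = a i - b i" for i unfolding a_def b_def by auto
  have ab0: "a i * b i = 0" for i unfolding a_def b_def by auto
  have an: "a i \<ge> 0" "b i \<ge> 0" for i unfolding a_def b_def by auto
  have e1: "(\<Sum>i\<in>I. (v i)^2) = (\<Sum>i\<in>I. (a i)^2) + (\<Sum>i\<in>I. (b i)^2)"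
  proof -
    have "(v i)^2 = (a i)^2 + (b i)^2" for i using ab0[of i] unfolding vab power2_eq_square by (simp add: algebra_simps)
    then show ?thesis by (simp add: sum.distrib)
  qed
  have e2: "(\<Sum>(s,t)\<in>A. v s * v t) = (\<Sum>(s,t)\<in>A. a s * a t) + (\<Sum>(s,t)\<in>A. b s * b t) - (\<Sum>(s,t)\<in>A. a s * b t + b s * a t)"
  proof -
    have "(\<Sum>(s,t)\<in>A. v s * v t) = (\<Sum>(s,t)\<in>A. a s * a t + b s * b t - (a s * b t + b s * a t))"
      by (intro sum.cong refl) (auto simp: vab algebra_simps)
    also have "\<dots> = (\<Sum>(s,t)\<in>A. a s * a t) + (\<Sum>(s,t)\<in>A. b s * b t) - (\<Sum>(s,t)\<in>A. a s * b t + b s * a t)"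
      by (simp add: sum_subtractf sum.distrib split_def)
    finally show ?thesis .
  qed
  have cross: "(\<Sum>(s,t)\<in>A. a s * b t + b s * a t) \<ge> 0" using an by (intro sum_nonneg) auto
  have tv: "tits v \<ge> tits a + tits b" unfolding tits_form_def e1 e2 using cross by simp
  show ?thesis
  proof (rule ccontr)
    assume "\<not> ?thesis"
    then obtain i j where "v i < 0" "v j > 0" by (auto simp: not_le)
    then have "i \<in> I" "j \<in> I" "b i \<noteq> 0" "a j \<noteq> 0" using off unfolding a_def b_def by fastforce+
    then have "tits a \<ge> 1" "tits b \<ge> 1" using tits_ge_1 by blast+
    then show False using tv t by simp
  qed
qed

lemma reflect_nonpos_unit:
  assumes nn: "\<And>i. r i \<ge> 0" and off: "\<And>i. i \<notin> I \<Longrightarrow> r i = 0" and t: "tits r = 1"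
    and neg: "\<And>i. reflect (layer q) r i \<le> 0"
  shows "\<exists>w\<in>layer q. r = (\<lambda>i. if i = w then 1 else 0)"
proof -
  let ?E = "layer q"
  have z1: "r i = 0" if "i \<notin> ?E" for i using neg[of i] nn[of i] that by (simp add: reflect_def)
  have z2: "nb_sum r i = 0" if "i \<in> ?E" for i unfolding nb_sum_def using layer_nb[OF that] z1 by simp
  have "tits r = (\<Sum>i\<in>I. (r i)^2)" unfolding tits_form_layer[of _ q] using z2 by simp
  then have sq: "(\<Sum>i\<in>I. (r i)^2) = 1" using t by simp
  obtain w where w: "w \<in> I" "r w \<noteq> 0"
  proof (rule ccontr)
    assume "\<not> thesis"
    then have "\<forall>i\<in>I. r i = 0" using that by blast
    then show False using sq by simp
  qed
  have wE: "w \<in> ?E" using w z1 by blast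
  have "(\<Sum>i\<in>I. (r i)^2) = (r w)^2 + (\<Sum>i\<in>I - {w}. (r i)^2)" using w finite_I by (simp add: sum.remove)
  moreover have "(r w)^2 \<ge> 1" using w nn[of w] by (smt (verit) one_le_power)
  moreover have "(\<Sum>i\<in>I - {w}. (r i)^2) \<ge> 0" by (intro sum_nonneg) auto
  ultimately have a: "(r w)^2 = 1" and b: "(\<Sum>i\<in>I - {w}. (r i)^2) = 0" using sq by linarith+
  have "r w = 1" using a nn[of w] by (smt (verit) power2_eq_1_iff)
  moreover have "r i = 0" if "i \<noteq> w" for i
  proof (cases "i \<in> I")
    case True
    then have "(r i)^2 = 0" using b finite_I that sum_nonneg_eq_0_iff[of "I - {w}" "\<lambda>i. (r i)^2"] by auto
    then show ?thesis by simp
  next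
    case False then show ?thesis using off by simp
  qed
  ultimately show ?thesis using wE by (intro bexI[of _ w]) auto
qed

definition tits_coeff :: "'i \<Rightarrow> 'i \<Rightarrow> rat" where
  "tits_coeff i j = (if i = j then 1 else 0) - (if (i,j) \<in> A then 1 else 0)"

lemma tits_form_quad_form: "rat_of_int (tits v) = quad_form tits_coeff I (\<lambda>i. rat_of_int (v i))"
proof -
  have "quad_form tits_coeff I (\<lambda>i. rat_of_int (v i)) = (\<Sum>i\<in>I. \<Sum>j\<in>I. (if i = j then of_int (v i) * of_int (v j) else 0) - (if (i,j) \<in> A then of_int (v i) * of_int (v j) else 0))"
    unfolding quad_form_def tits_coeff_def by (intro sum.cong refl) (auto simp: algebra_simps)
  also have "\<dots> = (\<Sum>i\<in>I. (of_int (v i))^2) - (\<Sum>i\<in>I. \<Sum>j\<in>I. (if (i,j) \<in> A then of_int (v i) * of_int (v j) else 0))"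
    using finite_I by (simp add: sum_subtractf sum.delta power2_eq_square)
  also have "(\<Sum>i\<in>I. \<Sum>j\<in>I. (if (i,j) \<in> A then rat_of_int (v i) * of_int (v j) else 0)) = (\<Sum>(s,t)\<in>A. of_int (v s) * of_int (v t))"
    by (rule sum_over_relation[OF finite_I A_subset, symmetric])
  finally show ?thesis unfolding tits_form_def by (simp add: of_int_sum split_def)
qed

lemma quad_form_scale: "quad_form c I (\<lambda>i. x * v i) = x * x * quad_form c I v"
  unfolding quad_form_def by (simp add: sum_distrib_left algebra_simps)

text \<open>Positivity on integer vectors passes to rational ones by clearing denominators.\<close>

lemma tits_coeff_posdef: "quad_form_posdef tits_coeff I"
  unfolding quad_form_posdef_def
proof (intro allI impI)
  fix v :: "'i \<Rightarrow> rat" assume v: "\<exists>i\<in>I. v i \<noteq> 0"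
  define n where "n i = fst (quotient_of (v i))" for i
  define d where "d i = snd (quotient_of (v i))" for i
  have vd: "v i = of_int (n i) / of_int (d i)" for i
    unfolding n_def d_def by (rule quotient_of_div) simp
  have dpos: "d i > 0" for i unfolding d_def by (rule quotient_of_denom_pos')
  define D where "D = (\<Prod>i\<in>I. d i)"
  have Dpos: "D > 0" unfolding D_def using dpos by (simp add: prod_pos)
  define w where "w i = (if i \<in> I then n i * (\<Prod>j\<in>I - {i}. d j) else 0)" for i
  have wv: "rat_of_int (w i) = of_int D * v i" if "i \<in> I" for i
  proof -
    have "D = d i * (\<Prod>j\<in>I - {i}. d j)" unfolding D_def using that finite_I by (simp add: prod.remove)
    then show ?thesis unfolding w_def vd using that dpos[of i] by (simp add: field_simps)
  qed
  obtain i0 where i0: "i0 \<in> I" "v i0 \<noteq> 0" using v by blast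
  have "w i0 \<noteq> 0"
  proof
    assume "w i0 = 0"
    then have "of_int D * v i0 = 0" using wv[OF i0(1)] by simp
    then show False using Dpos i0 by simp
  qed
  then have "tits w > 0" using i0 by (intro tits_pos) auto
  then have "0 < quad_form tits_coeff I (\<lambda>i. rat_of_int (w i))" using tits_form_quad_form[of w] by linarith
  also have "quad_form tits_coeff I (\<lambda>i. rat_of_int (w i)) = quad_form tits_coeff I (\<lambda>i. of_int D * v i)" by (rule quad_form_cong) (simp add: wv)
  also have "\<dots> = of_int D * of_int D * quad_form tits_coeff I v" by (rule quad_form_scale)
  finally show "0 < quad_form tits_coeff I v" using Dpos by (simp add: zero_less_mult_iff)
qed

lemma finite_positive_roots: "finite {v. (\<forall>i. 0 \<le> v i) \<and> (\<forall>i. i \<notin> I \<longrightarrow> v i = 0) \<and> tits v = 1}"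
proof -
  have "finite {v :: 'i \<Rightarrow> int. (\<forall>i. i \<notin> I \<longrightarrow> v i = 0) \<and> quad_form tits_coeff I (\<lambda>i. of_int (v i)) \<le> 1}"
    by (rule quad_form_sublevel_finite[OF finite_I tits_coeff_posdef])
  moreover have "{v. (\<forall>i. 0 \<le> v i) \<and> (\<forall>i. i \<notin> I \<longrightarrow> v i = 0) \<and> tits v = 1}
     \<subseteq> {v :: 'i \<Rightarrow> int. (\<forall>i. i \<notin> I \<longrightarrow> v i = 0) \<and> quad_form tits_coeff I (\<lambda>i. of_int (v i)) \<le> 1}"
    using tits_form_quad_form by (auto simp flip: tits_form_quad_form)
  ultimately show ?thesis using finite_subset by blast
qed

section \<open>The hammock and the additive function\<close>

abbreviation "hom \<equiv> hw (max 0)"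
abbreviation "hlin \<equiv> hw (\<lambda>a. a)"

lemma hom_rec: "z \<in> V \<Longrightarrow> hom z v = (if v \<notin> V \<or> snd v < snd z then 0 else if v = z then 1
            else max 0 ((\<Sum>w\<in>preds v. hom z w) - hom z (tau v)))"
  by (rule hom_with_rec) simp
lemma hlin_rec: "z \<in> V \<Longrightarrow> hlin z v = (if v \<notin> V \<or> snd v < snd z then 0 else if v = z then 1
            else (\<Sum>w\<in>preds v. hlin z w) - hlin z (tau v))"
  using hom_with_rec[where cl="\<lambda>a. a"] by simp

lemma hom_nonneg: "z \<in> V \<Longrightarrow> hom z v \<ge> 0" using hom_rec[of z v] by auto
lemma hom_outside_V: "z \<in> V \<Longrightarrow> v \<notin> V \<Longrightarrow> hom z v = 0" using hom_rec by simp
lemma hlin_outside_V: "z \<in> V \<Longrightarrow> v \<notin> V \<Longrightarrow> hlin z v = 0" using hlin_rec by simp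

lemma hlin_mesh:
  assumes z: "z \<in> V" and v: "v \<in> V"
  shows "hlin z v + hlin z (tau v) - (\<Sum>w\<in>preds v. hlin z w) = (if v = z then 1 else 0)"
proof -
  have low: "(\<Sum>w\<in>preds v. hlin z w) = 0" if "snd v \<le> snd z" 
  proof (rule sum.neutral, intro ballI)
    fix w assume "w \<in> preds v"
    then have "snd w < snd z" using preds_layer[of w v] that by simp
    then show "hlin z w = 0" by (rule hom_with_below)
  qed
  show ?thesis
  proof (cases "snd v < snd z")
    case True then show ?thesis using low hom_with_below[of v z] hom_with_below[of "tau v" z] by auto
  next
    case False
    show ?thesis
    proof (cases "v = z")
      case True then show ?thesis using low hom_with_self[of "\<lambda>a. a" z] hom_with_below[of "tau v" z] z by simp
    next
      case False
      then show ?thesis using hlin_rec[OF z, of v] v \<open>\<not> snd v < snd z\<close> by simp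
    qed
  qed
qed

definition slice :: "'i \<times> int \<Rightarrow> int \<Rightarrow> 'i \<Rightarrow> int" where
  "slice z q = (\<lambda>i. hlin z (i, q) + hlin z (i, q + 1))"

lemma slice_outside_I: "z \<in> V \<Longrightarrow> i \<notin> I \<Longrightarrow> slice z q i = 0"
  unfolding slice_def using hlin_outside_V V_iff by auto

lemma slice_succ:
  assumes z: "z \<in> V" and q: "q \<ge> snd z - 1"
  shows "slice z (q + 1) = reflect (layer q) (slice z q)"
proof (rule ext)
  fix i
  show "slice z (q + 1) i = reflect (layer q) (slice z q) i"
  proof (cases "i \<in> layer q")
    case True
    have v2: "(i, q + 2) \<in> V" using True layer_iff_V layer_shift by metis
    have v1: "(i, q + 1) \<notin> V" using True layer_iff_V layer_succ by blast
    have ne: "(i, q + 2) \<noteq> z" using q by auto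
    have "hlin z (i, q + 2) = (\<Sum>w\<in>preds (i, q + 2). hlin z w) - hlin z (i, q)"
      using hlin_rec[OF z, of "(i, q+2)"] v2 ne q by (simp add: tau_def)
    also have "(\<Sum>w\<in>preds (i, q + 2). hlin z w) = (\<Sum>j\<in>nb i. hlin z (j, q + 1))"
      using sum_preds[OF v2, of "hlin z"] by (simp add: add.commute)
    finally have e2: "hlin z (i, q + 2) = (\<Sum>j\<in>nb i. hlin z (j, q + 1)) - hlin z (i, q)" .
    have e1: "hlin z (i, q + 1) = 0" using hlin_outside_V[OF z v1] .
    have ns: "nb_sum (slice z q) i = (\<Sum>j\<in>nb i. hlin z (j, q + 1))"
      unfolding nb_sum_def slice_def
    proof (rule sum.cong[OF refl])
      fix j assume "j \<in> nb i"
      then have "(j, q) \<notin> V" using layer_nb[OF True] layer_iff_V by blast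
      then show "hlin z (j, q) + hlin z (j, q + 1) = hlin z (j, q + 1)" using hlin_outside_V[OF z] by simp
    qed
    show ?thesis using True unfolding reflect_def ns unfolding slice_def using e1 e2 by (simp add: add.assoc)
  next
    case False
    have "(i, q + 2) \<notin> V" using False layer_iff_V layer_shift by metis
    then have "hlin z (i, q + 2) = 0" using hlin_outside_V[OF z] by simp
    moreover have "hlin z (i, q) = 0" using False layer_iff_V hlin_outside_V[OF z] by blast
    ultimately show ?thesis using False unfolding reflect_def slice_def by (simp add: add.assoc)
  qed
qed

lemma slice_start: "z \<in> V \<Longrightarrow> slice z (snd z - 1) = (\<lambda>i. if i = fst z then 1 else 0)"
proof (rule ext)
  fix i assume z: "z \<in> V"
  have "hlin z (i, snd z - 1) = 0" by (rule hom_with_below) simp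
  moreover have "hlin z (i, snd z) = (if i = fst z then 1 else 0)"
    using hom_with_same_layer[of "\<lambda>a. a" z "(i, snd z)"] z by (cases z) auto
  ultimately show "slice z (snd z - 1) i = (if i = fst z then 1 else 0)" unfolding slice_def by simp
qed

lemma tits_form_slice: assumes z: "z \<in> V" shows "q \<ge> snd z - 1 \<Longrightarrow> tits (slice z q) = 1"
proof (induction q rule: int_ge_induct)
  case base
  have "fst z \<in> I" using z in_V_iff by blast
  then show ?case using slice_start[OF z] tits_form_unit_vector[OF finite_A _ finite_I] no_loop by simp
next
  case (step q)
  then show ?case using slice_succ[OF z step(1)] tits_form_reflect by simp
qed

lemma slice_pred: "z \<in> V \<Longrightarrow> q \<ge> snd z - 1 \<Longrightarrow> slice z q = reflect (layer q) (slice z (q + 1))"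
  using slice_succ reflect_involution by metis

lemma layer_periodic: "layer (q + 2 * k) = layer q" unfolding layer_def by (auto simp: even_add)

lemma tits_form_zero_if_reflections_agree:
  assumes eq: "reflect (layer q) G = reflect (layer (q + 1)) G"
  shows "tits G = 0"
proof -
  let ?E0 = "layer q" and ?E1 = "layer (q + 1)"
  have nb_sum_G: "nb_sum G i = 2 * G i" if "i \<in> I" for i
  proof (cases "i \<in> ?E0")
    case True
    then have "i \<notin> ?E1" using layer_succ by blast
    then show ?thesis using fun_cong[OF eq, of i] True unfolding reflect_def by simp
  next
    case False
    then have "i \<in> ?E1" using layer_succ that by blast
    then show ?thesis using fun_cong[OF eq, of i] False unfolding reflect_def by simp
  qed
  have "tits G = (\<Sum>i\<in>I. (G i)^2) - 2 * (\<Sum>i\<in>?E0. (G i)^2)"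
    unfolding tits_form_layer[of G q] using nb_sum_G layer_subset[of q]
    by (auto simp: sum_distrib_left power2_eq_square intro!: sum.cong)
  moreover have "tits G = (\<Sum>i\<in>I. (G i)^2) - 2 * (\<Sum>i\<in>?E1. (G i)^2)"
    unfolding tits_form_layer[of G "q + 1"] using nb_sum_G layer_subset[of "q + 1"]
    by (auto simp: sum_distrib_left power2_eq_square intro!: sum.cong)
  moreover have "I - ?E0 = ?E1" using layer_succ layer_subset by blast
  moreover have "(\<Sum>i\<in>I. (G i)^2) = (\<Sum>i\<in>I - ?E0. (G i)^2) + (\<Sum>i\<in>?E0. (G i)^2)"
    by (rule sum.subset_diff[OF layer_subset finite_I])
  ultimately show ?thesis by simp
qed

text \<open>The reflections are involutions, so a repetition among the slices propagates back to the
  first slice.\<close>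

lemma slice_repetition_from_start:
  assumes z: "z \<in> V" and n12: "n1 < n2"
    and eq: "slice z (snd z - 1 + 2 * int n1) = slice z (snd z - 1 + 2 * int n2)"
  shows "slice z (snd z - 1) = slice z (snd z - 1 + 2 * int (n2 - n1))"
proof -
  define q0 where "q0 = snd z - 1"
  define D where "D = n2 - n1"
  have backwards: "slice z (q0 + 2 * int n1 - int s) = slice z (q0 + 2 * int n2 - int s)" if "s \<le> 2 * n1" for s
    using that
  proof (induction s)
    case 0 then show ?case using eq unfolding q0_def by simp
  next
    case (Suc s)
    define a where "a = q0 + 2 * int n1 - int (Suc s)"
    have a0: "a \<ge> snd z - 1" using Suc.prems unfolding a_def q0_def by simp
    have b: "q0 + 2 * int n2 - int (Suc s) = a + 2 * int D" unfolding a_def D_def using n12 by simp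
    have "slice z a = reflect (layer a) (slice z (a + 1))" using slice_pred[OF z a0] .
    moreover have "slice z (a + 2 * int D) = reflect (layer a) (slice z (a + 2 * int D + 1))"
      using slice_pred[OF z, of "a + 2 * int D"] a0 layer_periodic[of a "int D"] by simp
    moreover have "slice z (a + 1) = slice z (a + 2 * int D + 1)"
      using Suc.IH Suc.prems unfolding a_def D_def using n12 by (simp add: algebra_simps)
    ultimately show ?case unfolding b a_def[symmetric] by simp
  qed
  have "q0 + 2 * int D = q0 + 2 * int n2 - int (2 * n1)" unfolding D_def using n12 by (simp add: of_nat_diff)
  then show ?thesis using backwards[of "2 * n1"] unfolding q0_def D_def by (simp add: add_diff_eq)
qed

text \<open>Over one period the sum of the slices is fixed by the product of the reflections at two
  consecutive layers, so both reflections agree on it.\<close>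

lemma periodic_slice_sum_isotropic:
  assumes z: "z \<in> V" and per: "slice z (snd z - 1) = slice z (snd z - 1 + 2 * int D)"
  shows "tits (\<lambda>i. \<Sum>t<D. slice z (snd z - 1 + 2 * int t) i) = 0"
proof -
  define q0 where "q0 = snd z - 1"
  define G where "G = (\<lambda>i. \<Sum>t<D. slice z (q0 + 2 * int t) i)"
  have odd_sum: "reflect (layer q0) G = (\<lambda>i. \<Sum>t<D. slice z (q0 + 2 * int t + 1) i)"
  proof -
    have "reflect (layer q0) G = (\<lambda>i. \<Sum>t<D. reflect (layer q0) (slice z (q0 + 2 * int t)) i)"
      unfolding G_def by (rule reflect_sum)
    also have "\<dots> = (\<lambda>i. \<Sum>t<D. slice z (q0 + 2 * int t + 1) i)"
    proof (intro ext sum.cong refl)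
      fix i t
      have "layer q0 = layer (q0 + 2 * int t)" using layer_periodic[of q0 "int t"] by simp
      then show "reflect (layer q0) (slice z (q0 + 2 * int t)) i = slice z (q0 + 2 * int t + 1) i"
        using slice_succ[OF z, of "q0 + 2 * int t"] unfolding q0_def by simp
    qed
    finally show ?thesis .
  qed
  have "reflect (layer (q0 + 1)) (reflect (layer q0) G) = G"
  proof -
    have "reflect (layer (q0 + 1)) (reflect (layer q0) G)
        = (\<lambda>i. \<Sum>t<D. reflect (layer (q0 + 1)) (slice z (q0 + 2 * int t + 1)) i)"
      unfolding odd_sum by (rule reflect_sum)
    also have "\<dots> = (\<lambda>i. \<Sum>t<D. slice z (q0 + 2 * int (Suc t)) i)"
    proof (intro ext sum.cong refl)
      fix i t
      have "layer (q0 + 1) = layer (q0 + 2 * int t + 1)"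
        using layer_periodic[of "q0 + 1" "int t"] by (simp add: algebra_simps)
      then show "reflect (layer (q0 + 1)) (slice z (q0 + 2 * int t + 1)) i = slice z (q0 + 2 * int (Suc t)) i"
        using slice_succ[OF z, of "q0 + 2 * int t + 1"] unfolding q0_def by (simp add: algebra_simps)
    qed
    also have "\<dots> = G"
    proof (rule ext)
      fix i
      have "(\<Sum>t<D. slice z (q0 + 2 * int (Suc t)) i) + slice z (q0 + 2 * int 0) i
          = (\<Sum>t<Suc D. slice z (q0 + 2 * int t) i)"
        by (simp only: sum.lessThan_Suc_shift)
      also have "\<dots> = (\<Sum>t<D. slice z (q0 + 2 * int t) i) + slice z (q0 + 2 * int D) i" by simp
      finally have "(\<Sum>t<D. slice z (q0 + 2 * int (Suc t)) i) + slice z (q0 + 2 * int 0) i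
          = (\<Sum>t<D. slice z (q0 + 2 * int t) i) + slice z (q0 + 2 * int D) i" .
      then show "(\<Sum>t<D. slice z (q0 + 2 * int (Suc t)) i) = G i" unfolding G_def using per q0_def by simp
    qed
    finally show ?thesis .
  qed
  then have "reflect (layer q0) G = reflect (layer (q0 + 1)) G"
    using arg_cong[of _ _ "reflect (layer (q0 + 1))"] reflect_involution by metis
  then show ?thesis using tits_form_zero_if_reflections_agree unfolding G_def q0_def by blast
qed

text \<open>If all slices were nonnegative they would be positive roots; finitely many of those exist,
  so the slices would repeat, and the sum over a period would be a nonzero isotropic vector.\<close>

lemma slice_eventually_not_nonneg:
  assumes z: "z \<in> V"
  shows "\<exists>q \<ge> snd z - 1. \<not> (\<forall>i. slice z q i \<ge> 0)"
proof (rule ccontr)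
  assume "\<not> ?thesis"
  then have nonneg: "\<And>q i. q \<ge> snd z - 1 \<Longrightarrow> slice z q i \<ge> 0" by auto
  define f where "f n = slice z (snd z - 1 + 2 * int n)" for n :: nat
  have "f n \<in> {v. (\<forall>i. 0 \<le> v i) \<and> (\<forall>i. i \<notin> I \<longrightarrow> v i = 0) \<and> tits v = 1}" for n
    unfolding f_def using nonneg slice_outside_I[OF z] tits_form_slice[OF z] by simp
  then have "finite (range f)" using finite_positive_roots by (meson finite_subset image_subsetI)
  then have "\<not> inj f" using finite_imageD by blast
  then obtain n1 n2 where n12: "n1 < n2" "f n1 = f n2"
    unfolding inj_def by (metis linorder_neqE_nat)
  define D where "D = n2 - n1"
  define G where "G = (\<lambda>i. \<Sum>t<D. slice z (snd z - 1 + 2 * int t) i)"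
  have "tits G = 0" unfolding G_def
    using periodic_slice_sum_isotropic[OF z] slice_repetition_from_start[OF z n12(1)] n12(2)
    unfolding f_def D_def by blast
  moreover have "G (fst z) \<ge> 1"
  proof -
    have "G (fst z) = slice z (snd z - 1) (fst z) + (\<Sum>t\<in>{..<D} - {0}. slice z (snd z - 1 + 2 * int t) (fst z))"
      unfolding G_def using n12 D_def by (subst sum.remove[of _ 0]) auto
    moreover have "slice z (snd z - 1) (fst z) = 1" using slice_start[OF z] by simp
    moreover have "(\<Sum>t\<in>{..<D} - {0}. slice z (snd z - 1 + 2 * int t) (fst z)) \<ge> 0"
      using nonneg by (intro sum_nonneg) auto
    ultimately show ?thesis by simp
  qed
  moreover have "fst z \<in> I" using z in_V_iff by blast
  ultimately show False using tits_pos[of G] by force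
qed

lemma hlin_eq_slice:
  assumes z: "z \<in> V" and v: "(i, q) \<in> V"
  shows "hlin z (i, q) = slice z q i" and "hlin z (i, q) = slice z (q - 1) i"
proof -
  have "(i, q + 1) \<notin> V" "(i, q - 1) \<notin> V" using v unfolding V_iff by auto
  then show "hlin z (i, q) = slice z q i" "hlin z (i, q) = slice z (q - 1) i"
    unfolding slice_def using hlin_outside_V[OF z] by simp_all
qed

lemma reflect_unit_vector:
  assumes w: "w \<in> layer q"
  shows "reflect (layer q) (\<lambda>i. if i = w then 1 else 0) = (\<lambda>i. if i = w then -1 else 0)"
proof
  fix i
  show "reflect (layer q) (\<lambda>i. if i = w then 1 else 0) i = (if i = w then -1 else 0)"
  proof (cases "i \<in> layer q")
    case True
    have "w \<notin> nb i" using layer_nb[OF True] w by blast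
    then have "nb_sum (\<lambda>i. if i = w then 1 else 0) i = 0" unfolding nb_sum_def using finite_nb by simp
    then show ?thesis using True unfolding reflect_def by simp
  next
    case False then show ?thesis using w unfolding reflect_def by auto
  qed
qed

text \<open>The slice before the first one that is not nonnegative is a simple root \<open>w\<close>, being a positive
  root whose reflection at a layer is nonpositive.\<close>

lemma first_nonpositive_slice:
  assumes z: "z \<in> V"
  obtains q1 w where "q1 \<ge> snd z + 1" and "w \<in> layer (q1 - 1)"
    and "slice z (q1 - 1) = (\<lambda>i. if i = w then 1 else 0)"
    and "\<And>q i. snd z - 1 \<le> q \<Longrightarrow> q < q1 \<Longrightarrow> slice z q i \<ge> 0"
proof -
  define q0 where "q0 = snd z - 1"
  define S where "S = {k::nat. \<not> (\<forall>i. slice z (q0 + int k) i \<ge> 0)}"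
  obtain q where q: "q \<ge> snd z - 1" "\<not> (\<forall>i. slice z q i \<ge> 0)"
    using slice_eventually_not_nonneg[OF z] by blast
  then have "nat (q - q0) \<in> S" unfolding S_def q0_def by simp
  define k1 where "k1 = (LEAST k. k \<in> S)"
  have k1S: "k1 \<in> S" unfolding k1_def using \<open>nat (q - q0) \<in> S\<close> by (metis LeastI)
  have below: "slice z (q0 + int k) i \<ge> 0" if "k < k1" for k i
  proof -
    have "k \<notin> S" using not_less_Least[of k "\<lambda>k. k \<in> S"] that unfolding k1_def by blast
    then show ?thesis unfolding S_def by simp
  qed
  have k10: "k1 \<noteq> 0"
    using k1S slice_start[OF z] unfolding S_def q0_def by (cases "k1 = 0") (auto split: if_splits)
  define q1 where "q1 = q0 + int k1"
  have q1a: "q1 - 1 \<ge> snd z - 1" unfolding q1_def q0_def using k10 by simp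
  have nonneg: "\<forall>i. slice z (q1 - 1) i \<ge> 0"
    using below[of "k1 - 1"] k10 unfolding q1_def by (simp add: of_nat_diff algebra_simps)
  have step: "slice z q1 = reflect (layer (q1 - 1)) (slice z (q1 - 1))"
    using slice_succ[OF z q1a] by simp
  have nonpos: "\<forall>i. slice z q1 i \<le> 0"
  proof -
    have "tits (slice z q1) = 1" using tits_form_slice[OF z] q1a by simp
    then have "(\<forall>i. slice z q1 i \<ge> 0) \<or> (\<forall>i. slice z q1 i \<le> 0)"
      using root_sign_coherent slice_outside_I[OF z] by blast
    moreover have "\<not> (\<forall>i. slice z q1 i \<ge> 0)" using k1S unfolding S_def q1_def by simp
    ultimately show ?thesis by blast
  qed
  obtain w where w: "w \<in> layer (q1 - 1)" and unit: "slice z (q1 - 1) = (\<lambda>i. if i = w then 1 else 0)"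
    using reflect_nonpos_unit[of "slice z (q1 - 1)" "q1 - 1"] nonneg slice_outside_I[OF z]
      tits_form_slice[OF z q1a] nonpos step by auto
  have "k1 \<noteq> 1"
  proof
    assume "k1 = 1"
    then have "q1 - 1 = snd z - 1" unfolding q1_def q0_def by simp
    then have "w = fst z" using unit slice_start[OF z] by (metis one_neq_zero)
    moreover have "fst z \<in> layer (snd z)" using z layer_iff_V by (cases z) auto
    ultimately show False using w \<open>q1 - 1 = snd z - 1\<close> layer_succ[of "fst z" "snd z - 1"] by simp
  qed
  then have q1: "q1 \<ge> snd z + 1" unfolding q1_def q0_def using k10 by simp
  have "slice z q i \<ge> 0" if "snd z - 1 \<le> q" "q < q1" for q i
    using below[of "nat (q - q0)" i] that unfolding q1_def q0_def by simp
  then show ?thesis using that[OF q1 w unit] by blast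
qed

lemma hom_eq_hlin_while_nonneg:
  assumes z: "z \<in> V" and nonneg: "\<And>u. snd u \<le> L \<Longrightarrow> hlin z u \<ge> 0"
  shows "snd v \<le> L \<Longrightarrow> hom z v = hlin z v"
proof (induction v rule: layer_induct[where L="snd z"])
  case (1 v) then show ?case using hom_with_below by simp
next
  case (2 v)
  show ?case
  proof (cases "v \<notin> V \<or> v = z")
    case True then show ?thesis using hom_rec[OF z, of v] hlin_rec[OF z, of v] by auto
  next
    case False
    have "(\<Sum>w\<in>preds v. hom z w) = (\<Sum>w\<in>preds v. hlin z w)"
      by (rule sum.cong[OF refl]) (use 2 preds_layer in fastforce)
    moreover have "hom z (tau v) = hlin z (tau v)" using 2 by simp
    moreover have "hlin z v \<ge> 0" using nonneg 2 by simp
    ultimately show ?thesis using hom_rec[OF z, of v] hlin_rec[OF z, of v] False 2 by simp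
  qed
qed

lemma hom_vanishes_above:
  assumes z: "z \<in> V" and L: "L > snd z" and zero: "\<And>u. snd u = L \<Longrightarrow> hom z u = 0"
  shows "snd v \<ge> L \<Longrightarrow> hom z v = 0"
proof (induction v rule: layer_induct[where L="L + 1"])
  case (1 v) then show ?case using zero by simp
next
  case (2 v)
  show ?case
  proof (cases "v \<in> V")
    case False then show ?thesis using hom_outside_V[OF z] by simp
  next
    case True
    have "v \<noteq> z" using 2 L by auto
    moreover have "(\<Sum>w\<in>preds v. hom z w) = 0"
      by (rule sum.neutral) (use 2 preds_layer in fastforce)
    ultimately show ?thesis using hom_rec[OF z, of v] True hom_nonneg[OF z, of "tau v"] by simp
  qed
qed

lemma hlin_sum_vanishes_above:
  assumes z: "z \<in> V" and n: "n \<in> V" and "snd z \<le> L + 1" "snd n \<le> L + 1"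
    and zero: "\<And>u. snd u = L \<or> snd u = L + 1 \<Longrightarrow> hlin z u + hlin n u = 0"
  shows "snd v \<ge> L \<Longrightarrow> hlin z v + hlin n v = 0"
proof (induction v rule: layer_induct[where L="L + 2"])
  case (1 v) then show ?case by (intro zero) linarith
next
  case (2 v)
  show ?case
  proof (cases "v \<in> V")
    case False then show ?thesis using hlin_outside_V[OF z] hlin_outside_V[OF n] by simp
  next
    case True
    have "v \<noteq> z" "v \<noteq> n" using 2 assms(3,4) by auto
    have "(\<Sum>w\<in>preds v. hlin z w) + (\<Sum>w\<in>preds v. hlin n w) = (\<Sum>w\<in>preds v. hlin z w + hlin n w)"
      by (simp add: sum.distrib)
    also have "\<dots> = 0" by (rule sum.neutral) (use 2 preds_layer in fastforce)
    finally have "(\<Sum>w\<in>preds v. hlin z w) + (\<Sum>w\<in>preds v. hlin n w) = 0" .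
    moreover have "hlin z (tau v) + hlin n (tau v) = 0" using 2 by simp
    moreover have "hlin z v = (\<Sum>w\<in>preds v. hlin z w) - hlin z (tau v)"
      using hlin_rec[OF z, of v] True \<open>v \<noteq> z\<close> 2 assms(3) by simp
    moreover have "hlin n v = (\<Sum>w\<in>preds v. hlin n w) - hlin n (tau v)"
      using hlin_rec[OF n, of v] True \<open>v \<noteq> n\<close> 2 assms(4) by simp
    ultimately show ?thesis by linarith
  qed
qed

text \<open>The hammock of \<open>z\<close> is the additive function \<open>hlin z\<close> up to the first nonpositive slice,
  where \<open>hlin z\<close> takes the value \<open>-1\<close> at a single vertex \<open>n\<close>; from there on \<open>hlin n\<close>
  cancels it and the hammock vanishes.\<close>

lemma hammock_end_exists:
  assumes z: "z \<in> V"
  shows "\<exists>n. n \<in> V \<and> snd n \<ge> snd z + 2 \<and> (\<forall>v. hom z v = hlin z v + hlin n v)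
            \<and> (\<forall>v. snd v \<ge> snd n - 1 \<longrightarrow> hom z v = 0)"
proof -
  obtain q1 w where q1: "q1 \<ge> snd z + 1" and w: "w \<in> layer (q1 - 1)"
    and unit: "slice z (q1 - 1) = (\<lambda>i. if i = w then 1 else 0)"
    and below: "\<And>q i. snd z - 1 \<le> q \<Longrightarrow> q < q1 \<Longrightarrow> slice z q i \<ge> 0"
    using first_nonpositive_slice[OF z] by blast
  define n where "n = (w, q1 + 1)"
  have nV: "n \<in> V" unfolding n_def using w layer_iff_V layer_shift(3) by metis
  have w_layer: "(w, q1 - 1) \<in> V" using w layer_iff_V by blast
  then have "(w, q1 - 1 + 1) \<notin> V" unfolding V_iff by auto
  then have w_not: "(w, q1) \<notin> V" by simp
  have at_q1: "hlin z (i, q1) = 0" for i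
    using hlin_eq_slice(2)[OF z, of i q1] unit w_not hlin_outside_V[OF z] by (cases "(i, q1) \<in> V") auto
  have after_q1: "hlin z (i, q1 + 1) = (if i = w then -1 else 0)" for i
  proof (cases "(i, q1 + 1) \<in> V")
    case True
    have "slice z q1 = reflect (layer (q1 - 1)) (slice z (q1 - 1))"
      using slice_succ[OF z, of "q1 - 1"] q1 by simp
    then show ?thesis using hlin_eq_slice(2)[OF z True] unit reflect_unit_vector[OF w] by simp
  next
    case False then show ?thesis using hlin_outside_V[OF z] nV unfolding n_def by auto
  qed
  have hom_hlin: "hom z v = hlin z v" if "snd v \<le> q1" for v
  proof (rule hom_eq_hlin_while_nonneg[OF z _ that])
    fix u :: "'i \<times> int" assume u: "snd u \<le> q1"
    show "hlin z u \<ge> 0"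
    proof (cases "u \<in> V \<and> snd u \<ge> snd z")
      case True
      then show ?thesis using hlin_eq_slice(2)[OF z, of "fst u" "snd u"] below[of "snd u - 1" "fst u"] u by simp
    next
      case False then show ?thesis using hlin_outside_V[OF z, of u] hom_with_below[of u z] by auto
    qed
  qed
  have hom_zero: "hom z v = 0" if "snd v \<ge> q1" for v
    using hom_vanishes_above[OF z _ _ that] hom_hlin at_q1 q1 by (metis add1_zle_eq prod.collapse order_refl)
  have cancel: "hlin z v + hlin n v = 0" if "snd v \<ge> q1" for v
  proof (rule hlin_sum_vanishes_above[OF z nV _ _ _ that])
    fix u :: "'i \<times> int" assume "snd u = q1 \<or> snd u = q1 + 1"
    then show "hlin z u + hlin n u = 0"
    proof
      assume "snd u = q1"
      then show ?thesis using at_q1[of "fst u"] hom_with_below[of u n] unfolding n_def by (cases u) auto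
    next
      assume u: "snd u = q1 + 1"
      have "hlin n u = (if u = n then 1 else 0)"
        using hom_with_same_layer[of "\<lambda>a. a" n u] nV u unfolding n_def by simp
      then show ?thesis using after_q1[of "fst u"] u unfolding n_def by (cases u) auto
    qed
  qed (use q1 n_def in auto)
  have "\<forall>v. hom z v = hlin z v + hlin n v"
  proof
    fix v :: "'i \<times> int"
    show "hom z v = hlin z v + hlin n v"
      using hom_hlin[of v] hom_zero[of v] cancel[of v] hom_with_below[of v n]
      unfolding n_def by (cases "snd v \<le> q1") auto
  qed
  moreover have "snd n \<ge> snd z + 2" using q1 unfolding n_def by simp
  moreover have "\<forall>v. snd v \<ge> snd n - 1 \<longrightarrow> hom z v = 0" using hom_zero unfolding n_def by simp
  ultimately show ?thesis using nV by blast
qed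

text \<open>This vertex turns out to be \<open>\<Sigma>z\<close>, see \<open>shift_eq_shift_vertex\<close>.\<close>

definition shift_vertex :: "'i \<times> int \<Rightarrow> 'i \<times> int" where
  "shift_vertex z = (SOME n. n \<in> V \<and> snd n \<ge> snd z + 2 \<and> (\<forall>v. hom z v = hlin z v + hlin n v)
            \<and> (\<forall>v. snd v \<ge> snd n - 1 \<longrightarrow> hom z v = 0))"

lemma shift_vertex_props:
  assumes "z \<in> V"
  shows "shift_vertex z \<in> V" "snd (shift_vertex z) \<ge> snd z + 2" "\<And>v. hom z v = hlin z v + hlin (shift_vertex z) v"
    "\<And>v. snd v \<ge> snd (shift_vertex z) - 1 \<Longrightarrow> hom z v = 0"
  using someI_ex[OF hammock_end_exists[OF assms]] unfolding shift_vertex_def[symmetric] by auto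

lemma hlin_inject: assumes "n \<in> V" "m \<in> V" "\<And>v. hlin n v = hlin m v" shows "n = m"
proof -
  have "hlin m n = 1" using assms hom_with_self[of "\<lambda>a. a" n] by simp
  then have "snd n \<ge> snd m" using hom_with_below[of n m] by (cases "snd n < snd m") auto
  moreover have "hlin n m = 1" using assms hom_with_self[of "\<lambda>a. a" m] by simp
  then have "snd m \<ge> snd n" using hom_with_below[of m n] by (cases "snd m < snd n") auto
  ultimately have "snd m = snd n" by simp
  then have "hlin m n = (if n = m then 1 else 0)" using hom_with_same_layer[of "\<lambda>a. a" m n] assms by simp
  then show ?thesis using \<open>hlin m n = 1\<close> by (simp split: if_splits)
qed

lemma shift_vertex_unique:
  assumes z: "z \<in> V" and n: "n \<in> V" and h: "\<And>v. hom z v = hlin z v + hlin n v"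
  shows "shift_vertex z = n"
  using hlin_inject[OF shift_vertex_props(1)[OF z] n] shift_vertex_props(3)[OF z] h by (metis add_left_cancel)

lemma shift_vertex_tau_inv: assumes z: "z \<in> V" shows "shift_vertex (tau_inv z) = tau_inv (shift_vertex z)"
proof (rule shift_vertex_unique)
  show "tau_inv z \<in> V" using z V_tau by simp
  show "tau_inv (shift_vertex z) \<in> V" using shift_vertex_props(1)[OF z] V_tau by simp
  fix v
  have "hom (tau_inv z) v = hom z (tau v)" by (rule hom_with_tau_inv_tau) (use z in simp_all)
  also have "\<dots> = hlin z (tau v) + hlin (shift_vertex z) (tau v)" by (rule shift_vertex_props(3)[OF z])
  also have "hlin z (tau v) = hlin (tau_inv z) v" by (rule hom_with_tau_inv_tau[symmetric]) (use z in simp_all)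
  also have "hlin (shift_vertex z) (tau v) = hlin (tau_inv (shift_vertex z)) v"
    by (rule hom_with_tau_inv_tau[symmetric]) (use shift_vertex_props(1)[OF z] in simp_all)
  finally show "hom (tau_inv z) v = hlin (tau_inv z) v + hlin (tau_inv (shift_vertex z)) v" .
qed

lemma hom_mesh:
  assumes z: "z \<in> V" and v: "v \<in> V"
  shows "hom z v + hom z (tau v) - (\<Sum>w\<in>preds v. hom z w) = (if v = z then 1 else 0) + (if v = shift_vertex z then 1 else 0)"
proof -
  have nV: "shift_vertex z \<in> V" by (rule shift_vertex_props(1)[OF z])
  have "(\<Sum>w\<in>preds v. hom z w) = (\<Sum>w\<in>preds v. hlin z w) + (\<Sum>w\<in>preds v. hlin (shift_vertex z) w)"
    unfolding shift_vertex_props(3)[OF z] by (simp add: sum.distrib)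
  then show ?thesis using hlin_mesh[OF z v] hlin_mesh[OF nV v] shift_vertex_props(3)[OF z, of v] shift_vertex_props(3)[OF z, of "tau v"]
    by simp
qed

section \<open>Knitting backwards and Serre duality\<close>

definition hom_back :: "'i \<times> int \<Rightarrow> 'i \<times> int \<Rightarrow> int" where "hom_back a v = hom (mirror v) (mirror a)"
definition unshift_vertex :: "'i \<times> int \<Rightarrow> 'i \<times> int" where "unshift_vertex v = mirror (shift_vertex (mirror v))"

lemma mirror_in_V: "v \<in> V \<Longrightarrow> mirror v \<in> V" using V_tau by simp

lemma unshift_vertex_tau: assumes "v \<in> V" shows "unshift_vertex (tau v) = tau (unshift_vertex v)"
proof -
  have "mirror (tau v) = tau_inv (mirror v)" by (rule mirror_tau)
  then have "shift_vertex (mirror (tau v)) = tau_inv (shift_vertex (mirror v))" using shift_vertex_tau_inv[OF mirror_in_V[OF assms]] by simp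
  then show ?thesis unfolding unshift_vertex_def by (simp add: mirror_tau)
qed

lemma hom_back_mesh:
  assumes a: "a \<in> V" and v: "v \<in> V"
  shows "hom_back a v + hom_back (tau_inv a) v - (\<Sum>b\<in>succs a. hom_back b v) = (if a = v then 1 else 0) + (if a = unshift_vertex v then 1 else 0)"
proof -
  have h: "hom (mirror v) (mirror a) + hom (mirror v) (tau (mirror a)) - (\<Sum>w\<in>preds (mirror a). hom (mirror v) w)
     = (if mirror a = mirror v then 1 else 0) + (if mirror a = shift_vertex (mirror v) then 1 else 0)"
    by (rule hom_mesh[OF mirror_in_V[OF v] mirror_in_V[OF a]])
  have "(\<Sum>w\<in>preds (mirror a). hom (mirror v) w) = (\<Sum>b\<in>succs a. hom_back b v)"
    unfolding preds_mirror hom_back_def by (simp add: sum.reindex inj_on_def mirror_eq_iff)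
  moreover have "hom (mirror v) (tau (mirror a)) = hom_back (tau_inv a) v" unfolding hom_back_def by (simp add: mirror_tau)
  moreover have "mirror a = shift_vertex (mirror v) \<longleftrightarrow> a = unshift_vertex v" unfolding unshift_vertex_def by (metis mirror_mirror)
  ultimately show ?thesis using h unfolding hom_back_def[symmetric] by (simp add: mirror_eq_iff)
qed

lemma hom_back_above: "snd a > snd v \<Longrightarrow> hom_back a v = 0" unfolding hom_back_def by (rule hom_with_below) simp
lemma hom_back_below_end: "v \<in> V \<Longrightarrow> snd a \<le> snd (unshift_vertex v) + 1 \<Longrightarrow> hom_back a v = 0"
  unfolding hom_back_def by (rule shift_vertex_props(4)[OF mirror_in_V]) (auto simp: unshift_vertex_def)
lemma hom_back_nonneg: "v \<in> V \<Longrightarrow> hom_back a v \<ge> 0" unfolding hom_back_def using hom_nonneg mirror_in_V by blast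
lemma hom_back_self: "v \<in> V \<Longrightarrow> hom_back v v = 1" unfolding hom_back_def using hom_with_self[of "max 0"] mirror_in_V by simp
lemma hom_back_rec:
  assumes v: "v \<in> V"
  shows "hom_back a v = (if a \<notin> V \<or> snd a > snd v then 0 else if a = v then 1
          else max 0 ((\<Sum>b\<in>succs a. hom_back b v) - hom_back (tau_inv a) v))"
proof -
  have "hom_back a v = (if mirror a \<notin> V \<or> snd (mirror a) < snd (mirror v) then 0 else if mirror a = mirror v then 1
            else max 0 ((\<Sum>w\<in>preds (mirror a). hom (mirror v) w) - hom (mirror v) (tau (mirror a))))"
    unfolding hom_back_def by (rule hom_rec[OF mirror_in_V[OF v]])
  moreover have "(\<Sum>w\<in>preds (mirror a). hom (mirror v) w) = (\<Sum>b\<in>succs a. hom_back b v)"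
    unfolding preds_mirror hom_back_def by (simp add: sum.reindex inj_on_def mirror_eq_iff)
  moreover have "hom (mirror v) (tau (mirror a)) = hom_back (tau_inv a) v" unfolding hom_back_def by (simp add: mirror_tau)
  ultimately show ?thesis by (simp add: V_tau mirror_eq_iff)
qed

lemma hom_to_serre_vertex:
  assumes z: "z \<in> V"
  shows "hom z (tau (shift_vertex z)) = 1"
proof -
  let ?n = "shift_vertex z"
  have nV: "?n \<in> V" by (rule shift_vertex_props(1)[OF z])
  have nz: "?n \<noteq> z" using shift_vertex_props(2)[OF z] by auto
  have "hom z ?n = 0" by (rule shift_vertex_props(4)[OF z]) simp
  moreover have "(\<Sum>w\<in>preds ?n. hom z w) = 0"
  proof (rule sum.neutral, intro ballI)
    fix w assume "w \<in> preds ?n"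
    then have "snd w \<ge> snd ?n - 1" using preds_layer by simp
    then show "hom z w = 0" by (rule shift_vertex_props(4)[OF z])
  qed
  ultimately show ?thesis using hom_mesh[OF z nV] nz by simp
qed

lemma hom_eq_hom_back_serre:
  assumes z: "z \<in> V"
  shows "hom z a = hom_back a (tau (shift_vertex z))"
proof -
  define p where "p = tau (shift_vertex z)"
  have pV: "p \<in> V" unfolding p_def using shift_vertex_props(1)[OF z] V_tau by simp
  have sp: "snd p = snd (shift_vertex z) - 2" unfolding p_def by simp
  show ?thesis unfolding p_def[symmetric]
  proof (induction a rule: layer_induct_down[where L="snd p"])
    case (1 a)
    have "hom z a = 0" by (rule shift_vertex_props(4)[OF z]) (use 1 sp in simp)
    then show ?case using hom_back_above 1 by simp
  next
    case (2 a)
    show ?case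
    proof (cases "a \<in> V")
      case False
      then show ?thesis using hom_outside_V[OF z] hom_back_rec[OF pV, of a] by simp
    next
      case aV: True
      show ?thesis
      proof (cases "a = p")
        case True
        then show ?thesis using hom_to_serre_vertex[OF z] hom_back_self[OF pV] unfolding p_def by simp
      next
        case False
        have ta: "tau_inv a \<in> V" using aV V_tau by simp
        have ht: "hom z (tau_inv a) + hom z a - (\<Sum>w\<in>succs a. hom z w) = (if tau_inv a = z then 1 else 0) + (if tau_inv a = shift_vertex z then 1 else 0)"
          using hom_mesh[OF z ta] by (simp add: preds_tau_inv)
        have "tau_inv a \<noteq> shift_vertex z" using False unfolding p_def tau_inv_eq_iff_tau .
        then have ht': "hom z a = (\<Sum>w\<in>succs a. hom z w) - hom z (tau_inv a) + (if a = tau z then 1 else 0)"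
          using ht unfolding tau_inv_eq_iff_tau by simp
        have s: "(\<Sum>b\<in>succs a. hom_back b p) = (\<Sum>b\<in>succs a. hom z b)"
          by (rule sum.cong[OF refl]) (use 2 succs_layer in fastforce)
        have t: "hom_back (tau_inv a) p = hom z (tau_inv a)" using 2 by simp
        have k: "hom_back a p = max 0 ((\<Sum>w\<in>succs a. hom z w) - hom z (tau_inv a))"
          using hom_back_rec[OF pV, of a] aV 2(1) False s t by simp
        show ?thesis
        proof (cases "a = tau z")
          case True
          have "hom z a = 0" using True hom_with_below by simp
          then show ?thesis using ht' k True by simp
        next
          case False
          then show ?thesis using ht' k hom_nonneg[OF z, of a] by simp
        qed
      qed
    qed
  qed
qed

lemma unshift_vertex_serre: assumes z: "z \<in> V" shows "unshift_vertex (tau (shift_vertex z)) = tau z"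
proof -
  define p where "p = tau (shift_vertex z)"
  have pV: "p \<in> V" unfolding p_def using shift_vertex_props(1)[OF z] V_tau by simp
  have tz: "tau z \<in> V" using z V_tau by simp
  have kt: "hom_back (tau z) p + hom_back (tau_inv (tau z)) p - (\<Sum>b\<in>succs (tau z). hom_back b p) = (if tau z = p then 1 else 0) + (if tau z = unshift_vertex p then 1 else 0)"
    by (rule hom_back_mesh[OF tz pV])
  have "hom_back (tau z) p = 0" using hom_eq_hom_back_serre[OF z, of "tau z"] hom_with_below[of "tau z" z] unfolding p_def by simp
  moreover have "hom_back z p = 1" using hom_eq_hom_back_serre[OF z, of z] hom_with_self[of "max 0" z] z unfolding p_def by simp
  moreover have "(\<Sum>b\<in>succs (tau z). hom_back b p) = 0"
  proof (rule sum.neutral, intro ballI)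
    fix b assume "b \<in> succs (tau z)"
    then have "snd b < snd z" using succs_layer by fastforce
    then show "hom_back b p = 0" using hom_eq_hom_back_serre[OF z, of b] hom_with_below[of b z] unfolding p_def by simp
  qed
  moreover have "tau z \<noteq> p"
  proof
    assume "tau z = p"
    then have "snd (tau z) = snd p" by simp
    then show False using shift_vertex_props(2)[OF z] unfolding p_def by simp
  qed
  ultimately have "tau z = unshift_vertex p" using kt by (simp split: if_splits)
  then show ?thesis unfolding p_def by simp
qed

lemma unshift_shift_vertex: assumes z: "z \<in> V" shows "unshift_vertex (shift_vertex z) = z"
  using unshift_vertex_serre[OF z] unshift_vertex_tau[OF shift_vertex_props(1)[OF z]] by (simp add: tau_eq_iff)

lemma shift_unshift_vertex: assumes w: "w \<in> V" shows "shift_vertex (unshift_vertex w) = w"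
proof -
  have "unshift_vertex (shift_vertex (mirror w)) = mirror w" by (rule unshift_shift_vertex[OF mirror_in_V[OF w]])
  then have "mirror (shift_vertex (mirror (shift_vertex (mirror w)))) = mirror w" unfolding unshift_vertex_def .
  then have "shift_vertex (mirror (shift_vertex (mirror w))) = w" using mirror_eq_iff by metis
  then show ?thesis unfolding unshift_vertex_def .
qed

lemma unshift_vertex_iff: "a \<in> V \<Longrightarrow> v \<in> V \<Longrightarrow> a = unshift_vertex v \<longleftrightarrow> v = shift_vertex a"
  using shift_unshift_vertex unshift_shift_vertex by metis

lemma sum_preds_hom_back_mesh:
  assumes aV: "a \<in> V" and vV: "v \<in> V"
  shows "(\<Sum>v'\<in>preds v. hom_back a v')
    = (\<Sum>v'\<in>preds v. if a = v' then 1 else 0) + (\<Sum>v'\<in>preds v. if a = unshift_vertex v' then 1 else 0)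
      - (\<Sum>v'\<in>preds v. hom_back (tau_inv a) v') + (\<Sum>v'\<in>preds v. \<Sum>a'\<in>succs a. hom_back a' v')"
proof -
  have "(\<Sum>v'\<in>preds v. hom_back a v') = (\<Sum>v'\<in>preds v. (if a = v' then 1 else 0)
      + (if a = unshift_vertex v' then 1 else 0) - hom_back (tau_inv a) v' + (\<Sum>a'\<in>succs a. hom_back a' v'))"
  proof (rule sum.cong[OF refl])
    fix v' assume "v' \<in> preds v"
    then have "v' \<in> V" using preds_layer by simp
    from hom_back_mesh[OF aV this] show "hom_back a v' = (if a = v' then 1 else 0)
        + (if a = unshift_vertex v' then 1 else 0) - hom_back (tau_inv a) v' + (\<Sum>a'\<in>succs a. hom_back a' v')"
      by simp
  qed
  then show ?thesis by (simp add: sum.distrib sum_subtractf)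
qed

lemma sum_succs_hom_mesh:
  assumes vV: "v \<in> V"
  shows "(\<Sum>a'\<in>succs a. \<Sum>v'\<in>preds v. hom a' v')
    = (\<Sum>a'\<in>succs a. hom a' v) - (\<Sum>a'\<in>succs a. if v = a' then 1 else 0)
      - (\<Sum>a'\<in>succs a. if v = shift_vertex a' then 1 else 0) + (\<Sum>a'\<in>succs a. hom a' (tau v))"
proof -
  have "(\<Sum>a'\<in>succs a. \<Sum>v'\<in>preds v. hom a' v') = (\<Sum>a'\<in>succs a. hom a' v - (if v = a' then 1 else 0)
      - (if v = shift_vertex a' then 1 else 0) + hom a' (tau v))"
  proof (rule sum.cong[OF refl])
    fix a' assume "a' \<in> succs a"
    then have "a' \<in> V" using succs_layer by simp
    from hom_mesh[OF this vV] show "(\<Sum>v'\<in>preds v. hom a' v') = hom a' v - (if v = a' then 1 else 0)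
        - (if v = shift_vertex a' then 1 else 0) + hom a' (tau v)"
      by simp
  qed
  then show ?thesis by (simp add: sum.distrib sum_subtractf)
qed

text \<open>Comparing the mesh relation of \<open>hom\<close> in its second argument with that of \<open>hom_back\<close> in its
  first argument, using agreement at smaller distances, leaves only the boundary terms.\<close>

lemma hom_hom_back_difference:
  assumes aV: "a \<in> V" and vV: "v \<in> V" and d0: "snd v \<ge> snd a"
    and IH: "\<And>a' v'. a' \<in> V \<Longrightarrow> v' \<in> V \<Longrightarrow> snd v' - snd a' < snd v - snd a \<Longrightarrow> hom a' v' = hom_back a' v'"
  shows "hom a v = hom_back a v + (\<Sum>v'\<in>preds v. if a = unshift_vertex v' then 1 else 0)
           - (\<Sum>a'\<in>succs a. if v = shift_vertex a' then 1 else 0)"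
proof -
  have tv: "tau v \<in> V" and ta: "tau_inv a \<in> V" using aV vV V_tau by auto
  have pV: "v' \<in> V" "snd v' = snd v - 1" if "v' \<in> preds v" for v' using preds_layer that by auto
  have sV: "a' \<in> V" "snd a' = snd a + 1" if "a' \<in> succs a" for a' using succs_layer that by auto
  have e1: "hom a v + hom a (tau v) - (\<Sum>v'\<in>preds v. hom a v') = (if v = a then 1 else 0) + (if v = shift_vertex a then 1 else 0)"
    by (rule hom_mesh[OF aV vV])
  have e2: "hom a (tau v) = hom_back a (tau v)" by (rule IH[OF aV tv]) simp
  have e3: "(\<Sum>v'\<in>preds v. hom a v') = (\<Sum>v'\<in>preds v. hom_back a v')"
    by (rule sum.cong[OF refl]) (rule IH[OF aV], use pV in auto)
  have e4: "hom_back a (tau v) + hom_back (tau_inv a) (tau v) - (\<Sum>a'\<in>succs a. hom_back a' (tau v))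
      = (if a = tau v then 1 else 0) + (if a = unshift_vertex (tau v) then 1 else 0)"
    by (rule hom_back_mesh[OF aV tv])
  have e6a: "hom_back (tau_inv a) (tau v) = hom (tau_inv a) (tau v)" by (rule IH[OF ta tv, symmetric]) simp
  have e6b: "(\<Sum>a'\<in>succs a. hom_back a' (tau v)) = (\<Sum>a'\<in>succs a. hom a' (tau v))"
    by (rule sum.cong[OF refl]) (rule IH[symmetric], use sV tv in auto)
  have e6c: "(\<Sum>v'\<in>preds v. hom_back (tau_inv a) v') = (\<Sum>v'\<in>preds v. hom (tau_inv a) v')"
    by (rule sum.cong[OF refl]) (rule IH[symmetric], use pV ta in auto)
  have e6d: "(\<Sum>v'\<in>preds v. \<Sum>a'\<in>succs a. hom_back a' v') = (\<Sum>a'\<in>succs a. \<Sum>v'\<in>preds v. hom a' v')"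
    by (subst sum.swap) (intro sum.cong refl IH[symmetric], use pV sV in auto)
  have e8: "hom (tau_inv a) v + hom (tau_inv a) (tau v) - (\<Sum>v'\<in>preds v. hom (tau_inv a) v')
      = (if v = tau_inv a then 1 else 0) + (if v = shift_vertex (tau_inv a) then 1 else 0)"
    by (rule hom_mesh[OF ta vV])
  have e9a: "(\<Sum>a'\<in>succs a. hom a' v) = (\<Sum>a'\<in>succs a. hom_back a' v)"
    by (rule sum.cong[OF refl]) (rule IH, use sV vV d0 in auto)
  have e9b: "hom (tau_inv a) v = hom_back (tau_inv a) v" by (rule IH[OF ta vV]) simp
  have e10: "hom_back a v + hom_back (tau_inv a) v - (\<Sum>a'\<in>succs a. hom_back a' v)
      = (if a = v then 1 else 0) + (if a = unshift_vertex v then 1 else 0)"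
    by (rule hom_back_mesh[OF aV vV])
  have f1: "(if a = unshift_vertex v then 1 else 0) = (if v = shift_vertex a then (1::int) else 0)"
    using unshift_vertex_iff[OF aV vV] by simp
  have f2: "(if a = unshift_vertex (tau v) then 1 else 0) = (if v = shift_vertex (tau_inv a) then (1::int) else 0)"
  proof -
    have "a = unshift_vertex (tau v) \<longleftrightarrow> tau v = shift_vertex a" by (rule unshift_vertex_iff[OF aV tv])
    also have "\<dots> \<longleftrightarrow> v = tau_inv (shift_vertex a)" by (metis tau_tau_inv)
    also have "tau_inv (shift_vertex a) = shift_vertex (tau_inv a)" using shift_vertex_tau_inv[OF aV] by simp
    finally show ?thesis by simp
  qed
  have f3: "(if a = tau v then 1 else 0) = (if v = tau_inv a then (1::int) else 0)" by (metis tau_tau_inv)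
  have f4: "(\<Sum>v'\<in>preds v. if a = v' then 1 else 0) = (\<Sum>a'\<in>succs a. if v = a' then 1 else (0::int))"
    using finite_preds finite_succs by (simp add: succs_iff_preds eq_commute[of a] eq_commute[of v])
  have f5: "(if v = a then 1 else 0) = (if a = v then (1::int) else 0)" by auto
  show ?thesis
    using e1 e2 e3 e4 sum_preds_hom_back_mesh[OF aV vV] e6a e6b e6c e6d sum_succs_hom_mesh[OF vV, of a]
      e8 e9a e9b e10 f1 f2 f3 f4 f5
    by linarith
qed

lemma hom_eq_hom_back: "a \<in> V \<Longrightarrow> v \<in> V \<Longrightarrow> hom a v = hom_back a v"
proof (induction "nat (snd v - snd a)" arbitrary: a v rule: less_induct)
  case less
  note aV = less.prems(1) and vV = less.prems(2)
  show ?case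
  proof (cases "snd v < snd a")
    case True then show ?thesis using hom_with_below hom_back_above by simp
  next
    case False
    define S1 where "S1 = (\<Sum>v'\<in>preds v. (if a = unshift_vertex v' then 1 else 0) :: int)"
    define S2 where "S2 = (\<Sum>a'\<in>succs a. (if v = shift_vertex a' then 1 else 0) :: int)"
    have IH: "hom a' v' = hom_back a' v'"
      if "a' \<in> V" "v' \<in> V" "snd v' - snd a' < snd v - snd a" for a' v'
    proof (cases "snd v' < snd a'")
      case True then show ?thesis using hom_with_below hom_back_above by simp
    next
      case False then show ?thesis using less.hyps[of v' a'] that by simp
    qed
    have diff: "hom a v = hom_back a v + S1 - S2"
      unfolding S1_def S2_def using False by (intro hom_hom_back_difference[OF aV vV _ IH]) auto
    have S1H: "hom a v = 0" if nonzero: "S1 \<noteq> 0"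
    proof -
      have "\<exists>v'\<in>preds v. a = unshift_vertex v'"
      proof (rule ccontr)
        assume "\<not> ?thesis"
        then have "S1 = 0" unfolding S1_def by (intro sum.neutral) auto
        with nonzero show False by simp
      qed
      then obtain v' where v': "v' \<in> preds v" "a = unshift_vertex v'" by blast
      then have "v' = shift_vertex a" using unshift_vertex_iff[OF aV] preds_layer by blast
      then have "snd v \<ge> snd (shift_vertex a) - 1" using preds_layer v' by simp
      then show ?thesis by (rule shift_vertex_props(4)[OF aV])
    qed
    have S2K: "hom_back a v = 0" if nonzero: "S2 \<noteq> 0"
    proof -
      have "\<exists>a'\<in>succs a. v = shift_vertex a'"
      proof (rule ccontr)
        assume "\<not> ?thesis"
        then have "S2 = 0" unfolding S2_def by (intro sum.neutral) auto
        with nonzero show False by simp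
      qed
      then obtain a' where a': "a' \<in> succs a" "v = shift_vertex a'" by blast
      then have "unshift_vertex v = a'" using unshift_shift_vertex succs_layer by blast
      then have "snd a \<le> snd (unshift_vertex v) + 1" using succs_layer a' by simp
      then show ?thesis by (rule hom_back_below_end[OF vV])
    qed
    have "S1 \<ge> 0" "S2 \<ge> 0" unfolding S1_def S2_def by (auto intro: sum_nonneg)
    then show ?thesis
      using diff S1H S2K hom_nonneg[OF aV, of v] hom_back_nonneg[OF vV, of a]
      by (cases "S1 = 0"; cases "S2 = 0") auto
  qed
qed

lemma hom_contra_mesh:
  assumes x: "x \<in> V" and v: "v \<in> V"
  shows "hom x v + hom (tau_inv x) v - (\<Sum>y\<in>succs x. hom y v) = (if x = v then 1 else 0) + (if v = shift_vertex x then 1 else 0)"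
proof -
  have tx: "tau_inv x \<in> V" using x V_tau by simp
  have "(\<Sum>y\<in>succs x. hom y v) = (\<Sum>y\<in>succs x. hom_back y v)"
    by (rule sum.cong[OF refl]) (rule hom_eq_hom_back, use succs_layer v in auto)
  then show ?thesis using hom_back_mesh[OF x v] hom_eq_hom_back[OF x v] hom_eq_hom_back[OF tx v] unshift_vertex_iff[OF x v] by simp
qed

lemma serre_duality:
  assumes x: "x \<in> V" and y: "y \<in> V"
  shows "hom y (tau (shift_vertex x)) = hom x y"
proof -
  have pV: "tau (shift_vertex x) \<in> V" using shift_vertex_props(1)[OF x] V_tau by simp
  show ?thesis using hom_eq_hom_back[OF y pV] hom_eq_hom_back_serre[OF x, of y] by simp
qed

lemma serre_duality_unique:
  assumes x: "x \<in> V" and z: "z \<in> V" and h: "\<forall>y\<in>V. hom y z = hom x y"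
  shows "z = tau (shift_vertex x)"
proof -
  define p where "p = tau (shift_vertex x)"
  have pV: "p \<in> V" unfolding p_def using shift_vertex_props(1)[OF x] V_tau by simp
  have hp: "\<forall>y\<in>V. hom y z = hom y p" using h serre_duality[OF x] unfolding p_def by simp
  have "hom z p = 1" using hp hom_with_self[of "max 0" z] z by simp
  then have "snd p \<ge> snd z" using hom_with_below[of p z] by (cases "snd p < snd z") auto
  moreover have "hom p z = 1" using hp hom_with_self[of "max 0" p] pV by simp
  then have "snd z \<ge> snd p" using hom_with_below[of z p] by (cases "snd z < snd p") auto
  ultimately have "hom z p = (if p = z then 1 else 0)" using hom_with_same_layer[of "max 0" z p] z by simp
  then show ?thesis using \<open>hom z p = 1\<close> unfolding p_def by (simp split: if_splits)
qed

section \<open>Sections and the hammock function\<close>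

definition potential :: "'i \<Rightarrow> int" where "potential = (SOME p. \<forall>(s,t)\<in>A. p s - p t = 1)"

lemma potential_arrow: "\<forall>(s,t)\<in>A. potential s - potential t = 1"
proof -
  have ex: "\<exists>p :: 'i \<Rightarrow> int. \<forall>(s,t)\<in>A. p s - p t = 1" by (rule tits_form_pos_potential[OF finite_I A_subset tits_pos])
  show ?thesis unfolding potential_def using someI_ex[OF ex] .
qed

definition height :: "'i \<times> int \<Rightarrow> 'i \<Rightarrow> int" where "height z i = potential i + (snd z - potential (fst z))"

lemma height_arrow: "\<forall>(s,t)\<in>A. height z s - height z t = 1" using potential_arrow unfolding height_def by auto
lemma height_base: "height z (fst z) = snd z" unfolding height_def by simp

lemma height_nb: "j \<in> nb i \<Longrightarrow> height z j \<le> height z i + 1 \<and> height z j \<ge> height z i - 1"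
  using height_arrow[of z] unfolding neighbors_def by fastforce

lemma potentials_differ_by_const:
  assumes p: "\<forall>(s,t)\<in>A. p s - p t = (1::int)" and q: "\<forall>(s,t)\<in>A. q s - q t = (1::int)"
    and ij: "i \<in> I" "j \<in> I"
  shows "p j - q j = p i - q i"
proof -
  have "(i, j) \<in> (A \<union> A\<inverse>)\<^sup>*" using connected ij by blast
  then show ?thesis
  proof (induction rule: rtrancl_induct)
    case base then show ?case by simp
  next
    case (step k l)
    have "p l - q l = p k - q k"
    proof (cases "(k,l) \<in> A")
      case True
      then have "p k - p l = 1" "q k - q l = 1" using bspec[OF p True] bspec[OF q True] by simp_all
      then show ?thesis by simp
    next
      case False
      then have kl: "(l,k) \<in> A" using step(2) by auto
      then have "p l - p k = 1" "q l - q k = 1" using bspec[OF p kl] bspec[OF q kl] by simp_all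
      then show ?thesis by simp
    qed
    then show ?case using step by simp
  qed
qed

lemma height_in_V: assumes z: "z \<in> V" and i: "i \<in> I" shows "(i, height z i) \<in> V"
proof -
  have fz: "fst z \<in> I" using z in_V_iff by blast
  have "(fst z, i) \<in> (A \<union> A\<inverse>)\<^sup>*" using connected[OF fz i] .
  then have "even (height z i) \<longleftrightarrow> par i"
  proof (induction rule: rtrancl_induct)
    case base then show ?case using z in_V_iff height_base[of z] by simp
  next
    case (step k l)
    have pp: "height z l = height z k + 1 \<or> height z l = height z k - 1" and pr: "par l \<noteq> par k"
    proof -
      show "height z l = height z k + 1 \<or> height z l = height z k - 1"
      proof (cases "(k,l) \<in> A")
        case True then have "height z k - height z l = 1" using bspec[OF height_arrow True] by simp
        then show ?thesis by simp
      next
        case False then have kl: "(l,k) \<in> A" using step(2) by auto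
        then have "height z l - height z k = 1" using bspec[OF height_arrow kl] by simp
        then show ?thesis by simp
      qed
      show "par l \<noteq> par k"
      proof (cases "(k,l) \<in> A")
        case True then show ?thesis using arrow_parity by metis
      next
        case False then have kl: "(l,k) \<in> A" using step(2) by auto
        then show ?thesis using arrow_parity by metis
      qed
    qed
    have "even (height z l) \<longleftrightarrow> \<not> even (height z k)" using pp by auto
    then show ?case using step.IH pr by auto
  qed
  then show ?thesis using i V_iff by simp
qed

lemma section_of_eq:
  assumes z: "z \<in> V"
  shows "section_of I A z = {(i, height z i) | i. i \<in> I}"
  unfolding section_of_def
proof (rule the_equality)
  have "fst z \<in> I" using z in_V_iff by blast
  then show "is_section I A {(i, height z i) | i. i \<in> I} \<and> z \<in> {(i, height z i) | i. i \<in> I}"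
    unfolding is_section_def using height_arrow[of z] height_base[of z] by (auto intro!: exI[of _ "fst z"] simp: prod_eq_iff)
  fix S assume "is_section I A S \<and> z \<in> S"
  then obtain p where p: "\<forall>(s,t)\<in>A. p s - p t = 1" and S: "S = {(i, p i) | i. i \<in> I}" and zS: "z \<in> S"
    unfolding is_section_def by blast
  obtain i0 where i0: "i0 \<in> I" "z = (i0, p i0)" using zS S by blast
  have "p i = height z i" if "i \<in> I" for i
    using potentials_differ_by_const[OF p height_arrow[of z] i0(1) that] i0 height_base[of z] by simp
  then show "S = {(i, height z i) | i. i \<in> I}" unfolding S by force
qed

lemma hom_nonzero_above_section:
  assumes z: "z \<in> V"
  shows "hom z w \<noteq> 0 \<Longrightarrow> height z (fst w) \<le> snd w"
proof (induction w rule: layer_induct[where L="snd z"])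
  case (1 w) then show ?case using hom_with_below by simp
next
  case (2 w)
  show ?case
  proof (cases "w = z")
    case True then show ?thesis using height_base by simp
  next
    case False
    have wV: "w \<in> V" using 2 hom_outside_V[OF z] by blast
    have "max 0 ((\<Sum>u\<in>preds w. hom z u) - hom z (tau w)) \<noteq> 0" using hom_rec[OF z, of w] 2 False wV by simp
    then have "(\<Sum>u\<in>preds w. hom z u) \<noteq> 0" using hom_nonneg[OF z, of "tau w"] by auto
    then obtain u where u: "u \<in> preds w" "hom z u \<noteq> 0" using sum.neutral by (metis (mono_tags, lifting))
    have "snd u = snd w - 1" using preds_layer u by simp
    then have "height z (fst u) \<le> snd w - 1" using 2(2)[of u] u by simp
    moreover have "fst u \<in> nb (fst w)" using u(1) wV preds_eq by auto
    ultimately show ?thesis using height_nb[of "fst w" "fst u" z] nb_sym by fastforce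
  qed
qed

lemma hom_eq_hlin_below_section:
  assumes z: "z \<in> V"
  shows "snd v \<le> height z (fst v) \<Longrightarrow> hom z v = hlin z v"
proof (induction v rule: layer_induct[where L="snd z"])
  case (1 v) then show ?case using hom_with_below by simp
next
  case (2 v)
  show ?case
  proof (cases "v \<notin> V \<or> v = z")
    case True then show ?thesis using hom_rec[OF z, of v] hlin_rec[OF z, of v] by auto
  next
    case False
    then have vV: "v \<in> V" and vz: "v \<noteq> z" by auto
    have pr: "(\<Sum>u\<in>preds v. hom z u) = (\<Sum>u\<in>preds v. hlin z u)"
    proof (rule sum.cong[OF refl])
      fix u assume u: "u \<in> preds v"
      have "fst u \<in> nb (fst v)" using u vV preds_eq by auto
      then have "height z (fst u) \<ge> height z (fst v) - 1" using height_nb nb_sym by blast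
      moreover have "snd u = snd v - 1" using preds_layer u by simp
      ultimately show "hom z u = hlin z u" using 2(2)[of u] 2(3) by simp
    qed
    have t0: "hom z (tau v) = 0"
    proof (rule ccontr)
      assume "hom z (tau v) \<noteq> 0"
      then have "height z (fst v) \<le> snd v - 2" using hom_nonzero_above_section[OF z] by fastforce
      then show False using 2(3) by simp
    qed
    have t1: "hlin z (tau v) = 0" using t0 2(2)[of "tau v"] 2(3) by simp
    have "(\<Sum>u\<in>preds v. hom z u) \<ge> 0" using hom_nonneg[OF z] by (intro sum_nonneg) auto
    then show ?thesis using hom_rec[OF z, of v] hlin_rec[OF z, of v] vV vz 2(1) pr t0 t1 by simp
  qed
qed

lemma tilde_eq: "tilde I A par f v = f v + f (tau v) - (\<Sum>w\<in>preds v. f w)"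
  unfolding tilde_def by simp

lemma height_parity_gap:
  assumes z: "z \<in> V" and vV: "v \<in> V" and ne: "snd v \<noteq> height z (fst v)"
  shows "snd v \<ge> height z (fst v) + 2 \<or> snd v \<le> height z (fst v) - 2"
proof -
  have fI: "fst v \<in> I" using vV in_V_iff by blast
  have "(fst v, height z (fst v)) \<in> V" using height_in_V[OF z fI] .
  then have "even (height z (fst v)) \<longleftrightarrow> par (fst v)" using V_iff by blast
  moreover have "even (snd v) \<longleftrightarrow> par (fst v)" using vV in_V_iff by blast
  ultimately have "even (snd v - height z (fst v))" by simp
  then obtain k where k: "snd v - height z (fst v) = 2 * k" by (rule evenE)
  then have "k \<ge> 1 \<or> k \<le> -1" using ne by auto
  then show ?thesis using k by linarith
qed

lemma vanishes_on_section:
  assumes sec: "\<forall>i\<in>I. d (i, height z i) = (0::int)" and out: "\<forall>v. v \<notin> V \<longrightarrow> d v = 0"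
    and v: "\<not> (v \<in> V \<and> snd v \<noteq> height z (fst v))"
  shows "d v = 0"
proof (cases "v \<in> V")
  case True
  then have "fst v \<in> I" and "v = (fst v, height z (fst v))" using v in_V_iff by (auto simp: prod_eq_iff)
  then show ?thesis using sec by metis
qed (use out in blast)

text \<open>A solution of the homogeneous mesh equations is determined by its values on a section:
  knitting forwards recovers the values above the section, and knitting backwards (solving the
  mesh equation at \<open>tau_inv v\<close> for \<open>v\<close>) those below.\<close>

lemma mesh_solution_vanishes_above_section:
  assumes z: "z \<in> V"
    and mesh: "\<forall>v\<in>V. d v + d (tau v) - (\<Sum>w\<in>preds v. d w) = 0"
    and sec: "\<forall>i\<in>I. d (i, height z i) = (0::int)"
    and out: "\<forall>v. v \<notin> V \<longrightarrow> d v = 0"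
  shows "snd v \<ge> height z (fst v) \<Longrightarrow> d v = 0"
proof (induction v rule: layer_induct[where L="Min (height z ` I)"])
  case (1 v)
  show ?case
  proof (cases "v \<in> V")
    case True
    then have "Min (height z ` I) \<le> height z (fst v)" using finite_I in_V_iff by simp
    then show ?thesis using 1 by simp
  qed (use out in blast)
next
  case (2 v)
  show ?case
  proof (cases "v \<in> V \<and> snd v \<noteq> height z (fst v)")
    case False then show ?thesis using vanishes_on_section[OF sec out] by blast
  next
    case True
    then have vV: "v \<in> V" and above: "snd v \<ge> height z (fst v) + 2"
      using height_parity_gap[OF z, of v] 2(3) by auto
    have "(\<Sum>w\<in>preds v. d w) = 0"
    proof (rule sum.neutral, intro ballI)
      fix w assume w: "w \<in> preds v"
      have "fst w \<in> nb (fst v)" using w vV preds_eq by auto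
      then have "height z (fst w) \<le> height z (fst v) + 1" using height_nb nb_sym by blast
      moreover have "snd w = snd v - 1" using preds_layer w by simp
      ultimately show "d w = 0" using 2(2)[of w] above by simp
    qed
    moreover have "d (tau v) = 0" using 2(2)[of "tau v"] above by simp
    ultimately show ?thesis using bspec[OF mesh vV] by simp
  qed
qed

lemma mesh_solution_vanishes_below_section:
  assumes z: "z \<in> V"
    and mesh: "\<forall>v\<in>V. d v + d (tau v) - (\<Sum>w\<in>preds v. d w) = 0"
    and sec: "\<forall>i\<in>I. d (i, height z i) = (0::int)"
    and out: "\<forall>v. v \<notin> V \<longrightarrow> d v = 0"
  shows "snd v \<le> height z (fst v) \<Longrightarrow> d v = 0"
proof (induction v rule: layer_induct_down[where L="Max (height z ` I)"])
  case (1 v)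
  show ?case
  proof (cases "v \<in> V")
    case True
    then have "height z (fst v) \<le> Max (height z ` I)" using finite_I in_V_iff by simp
    then show ?thesis using 1 by simp
  qed (use out in blast)
next
  case (2 v)
  show ?case
  proof (cases "v \<in> V \<and> snd v \<noteq> height z (fst v)")
    case False then show ?thesis using vanishes_on_section[OF sec out] by blast
  next
    case True
    then have vV: "v \<in> V" and below: "snd v \<le> height z (fst v) - 2"
      using height_parity_gap[OF z, of v] 2(3) by auto
    have uV: "tau_inv v \<in> V" using vV V_tau by simp
    have "(\<Sum>w\<in>preds (tau_inv v). d w) = 0"
    proof (rule sum.neutral, intro ballI)
      fix w assume w: "w \<in> preds (tau_inv v)"
      have "fst w \<in> nb (fst v)" using w uV preds_eq by auto
      then have "height z (fst w) \<ge> height z (fst v) - 1" using height_nb nb_sym by blast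
      moreover have "snd w = snd v + 1" using preds_layer w by simp
      ultimately show "d w = 0" using 2(2)[of w] below by simp
    qed
    moreover have "d (tau_inv v) = 0" using 2(2)[of "tau_inv v"] below by simp
    ultimately show ?thesis using bspec[OF mesh uV] by simp
  qed
qed

lemma mesh_solution_vanishes:
  assumes "z \<in> V"
    and "\<forall>v\<in>V. d v + d (tau v) - (\<Sum>w\<in>preds v. d w) = 0"
    and "\<forall>i\<in>I. d (i, height z i) = (0::int)"
    and "\<forall>v. v \<notin> V \<longrightarrow> d v = 0"
  shows "d v = 0"
  using mesh_solution_vanishes_above_section[OF assms, of v] mesh_solution_vanishes_below_section[OF assms, of v]
  by linarith

lemma hfun_eq:
  assumes z: "z \<in> V"
  shows "hfun I A par z = hlin z"
  unfolding hfun_def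
proof (rule the_equality)
  show "(\<forall>v\<in>V. tilde I A par (hlin z) v = delta z v) \<and> (\<forall>y\<in>section_of I A z. hlin z y = hom_dim I A par z y) \<and> (\<forall>v. v \<notin> V \<longrightarrow> hlin z v = 0)"
  proof (intro conjI ballI allI impI)
    fix v assume "v \<in> V"
    then show "tilde I A par (hlin z) v = delta z v" unfolding tilde_eq delta_def using hlin_mesh[OF z] by simp
  next
    fix y assume "y \<in> section_of I A z"
    then obtain i where "i \<in> I" "y = (i, height z i)" unfolding section_of_eq[OF z] by blast
    then show "hlin z y = hom_dim I A par z y" unfolding hom_dim_eq_hom_with using hom_eq_hlin_below_section[OF z, of y] by simp
  next
    fix v assume "v \<notin> V" then show "hlin z v = 0" using hlin_outside_V[OF z] by simp
  qed
  fix f assume f: "(\<forall>v\<in>V. tilde I A par f v = delta z v) \<and> (\<forall>y\<in>section_of I A z. f y = hom_dim I A par z y) \<and> (\<forall>v. v \<notin> V \<longrightarrow> f v = 0)"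
  define d where "d v = f v - hlin z v" for v
  have "d v = 0" for v
  proof (rule mesh_solution_vanishes[OF z])
    show "\<forall>v\<in>V. d v + d (tau v) - (\<Sum>w\<in>preds v. d w) = 0"
    proof
      fix v assume v: "v \<in> V"
      have "f v + f (tau v) - (\<Sum>w\<in>preds v. f w) = (if v = z then 1 else 0)"
        using f v unfolding tilde_eq delta_def by simp
      then show "d v + d (tau v) - (\<Sum>w\<in>preds v. d w) = 0"
        unfolding d_def sum_subtractf using hlin_mesh[OF z v] by simp
    qed
    show "\<forall>i\<in>I. d (i, height z i) = 0"
    proof
      fix i assume i: "i \<in> I"
      have "(i, height z i) \<in> section_of I A z" unfolding section_of_eq[OF z] using i by blast
      then have "f (i, height z i) = hom z (i, height z i)" using f unfolding hom_dim_eq_hom_with by simp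
      then show "d (i, height z i) = 0" unfolding d_def using hom_eq_hlin_below_section[OF z, of "(i, height z i)"] by simp
    qed
    show "\<forall>v. v \<notin> V \<longrightarrow> d v = 0" unfolding d_def using f hlin_outside_V[OF z] by simp
  qed
  then show "f = hlin z" unfolding d_def by (simp add: fun_eq_iff)
qed

lemma mesh_solution_vanishes_from_below:
  assumes mesh: "\<And>v. v \<in> V \<Longrightarrow> F v + F (tau v) - (\<Sum>w\<in>preds v. F w) = 0"
    and out: "\<And>v. v \<notin> V \<Longrightarrow> F v = 0" and below: "\<And>v. snd v < L \<Longrightarrow> F v = (0::int)"
  shows "F v = 0"
proof (induction v rule: layer_induct[where L=L])
  case (1 v) then show ?case by (rule below)
next
  case (2 v)
  show ?case
  proof (cases "v \<in> V")
    case True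
    have "(\<Sum>w\<in>preds v. F w) = 0" by (rule sum.neutral) (use 2 preds_layer in fastforce)
    then show ?thesis using mesh[OF True] 2(2)[of "tau v"] by simp
  qed (rule out)
qed

lemma hlin_contra_mesh:
  assumes x: "x \<in> V"
  shows "hlin x v - delta x v + hlin (tau_inv x) v = (\<Sum>y\<in>succs x. hlin y v)"
proof -
  have tx: "tau_inv x \<in> V" using x V_tau by simp
  have yV: "y \<in> V" "snd y = snd x + 1" if "y \<in> succs x" for y using succs_layer that by auto
  define F where "F v = hlin x v - (if v = x then 1 else 0) + hlin (tau_inv x) v - (\<Sum>y\<in>succs x. hlin y v)" for v
  have "F v = 0"
  proof (rule mesh_solution_vanishes_from_below[where L = "snd x"])
    fix v assume vV: "v \<in> V"
    have m1: "hlin x v + hlin x (tau v) - (\<Sum>w\<in>preds v. hlin x w) = (if v = x then 1 else 0)"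
      by (rule hlin_mesh[OF x vV])
    have m2: "hlin (tau_inv x) v + hlin (tau_inv x) (tau v) - (\<Sum>w\<in>preds v. hlin (tau_inv x) w)
        = (if v = tau_inv x then 1 else 0)"
      by (rule hlin_mesh[OF tx vV])
    have m3: "(\<Sum>y\<in>succs x. hlin y v) + (\<Sum>y\<in>succs x. hlin y (tau v)) - (\<Sum>w\<in>preds v. \<Sum>y\<in>succs x. hlin y w)
        = (\<Sum>y\<in>succs x. if v = y then 1 else 0)"
    proof -
      have "(\<Sum>y\<in>succs x. hlin y v + hlin y (tau v) - (\<Sum>w\<in>preds v. hlin y w)) = (\<Sum>y\<in>succs x. if v = y then 1 else 0)"
        by (rule sum.cong[OF refl]) (rule hlin_mesh, use yV vV in auto)
      then show ?thesis by (simp add: sum.distrib sum_subtractf sum.swap[of _ "preds v"])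
    qed
    have d1: "(\<Sum>y\<in>succs x. (if v = y then 1 else 0)) = (if v \<in> succs x then 1 else (0::int))"
      using finite_succs by (simp add: sum.delta)
    have d2: "(\<Sum>w\<in>preds v. (if w = x then 1 else 0)) = (if x \<in> preds v then 1 else (0::int))"
      using finite_preds by (simp add: sum.delta')
    have d3: "(if tau v = x then 1 else 0) = (if v = tau_inv x then (1::int) else 0)"
      by (metis tau_tau_inv)
    have d4: "(if v \<in> succs x then 1 else 0) = (if x \<in> preds v then (1::int) else 0)"
      by (simp add: succs_iff_preds)
    have "(\<Sum>w\<in>preds v. F w) = (\<Sum>w\<in>preds v. hlin x w) - (\<Sum>w\<in>preds v. (if w = x then 1 else 0))
        + (\<Sum>w\<in>preds v. hlin (tau_inv x) w) - (\<Sum>w\<in>preds v. \<Sum>y\<in>succs x. hlin y w)"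
      unfolding F_def by (simp add: sum.distrib sum_subtractf)
    then show "F v + F (tau v) - (\<Sum>w\<in>preds v. F w) = 0"
      using m1 m2 m3 d1 d2 d3 d4 unfolding F_def by simp
  next
    fix v :: "'i \<times> int" assume "v \<notin> V"
    then show "F v = 0" unfolding F_def
      using x hlin_outside_V[OF x] hlin_outside_V[OF tx] hlin_outside_V[OF yV(1)] by auto
  next
    fix v :: "'i \<times> int" assume "snd v < snd x"
    then show "F v = 0" unfolding F_def
      using hom_with_below[of v x] hom_with_below[of v "tau_inv x"] hom_with_below[of v] yV(2) by auto
  qed
  then show ?thesis unfolding F_def delta_def by (simp add: eq_commute[of v x])
qed

lemma hammock_count:
  assumes z: "z \<in> V"
  shows "count (hammock I A par z) y = (if y \<in> V then nat (hom z y) else 0)"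
proof -
  define f where "f y = (if y \<in> V then nat (hom z y) else 0)" for y
  have sub: "{y. 0 < f y} \<subseteq> I \<times> {snd z .. snd (shift_vertex z)}"
  proof
    fix y assume "y \<in> {y. 0 < f y}"
    then have yV: "y \<in> V" and h: "hom z y \<noteq> 0" unfolding f_def by (auto split: if_splits)
    have "snd y \<ge> snd z"
    proof (rule ccontr)
      assume "\<not> snd y \<ge> snd z"
      then have "hom z y = 0" by (intro hom_with_below) simp
      with h show False by simp
    qed
    moreover have "snd y < snd (shift_vertex z) - 1" using h shift_vertex_props(4)[OF z, of y] by fastforce
    ultimately show "y \<in> I \<times> {snd z .. snd (shift_vertex z)}" using yV in_V_iff by (cases y) auto
  qed
  have fin: "finite {y. 0 < f y}" by (rule finite_subset[OF sub]) (use finite_I in simp)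
  have cnt: "count (Abs_multiset f) = f" by (rule count_Abs_multiset[OF fin])
  have "hammock I A par z = Abs_multiset f"
    unfolding hammock_def
  proof (rule the_equality)
    show "\<forall>y. count (Abs_multiset f) y = (if y \<in> V then nat (hom_dim I A par z y) else 0)"
      unfolding cnt f_def hom_dim_eq_hom_with by simp
    fix M assume M: "\<forall>y. count M y = (if y \<in> V then nat (hom_dim I A par z y) else 0)"
    show "M = Abs_multiset f"
    proof (rule multiset_eqI)
      fix y show "count M y = count (Abs_multiset f) y" using spec[OF M, of y] unfolding cnt f_def hom_dim_eq_hom_with by simp
    qed
  qed
  then show ?thesis using cnt f_def by simp
qed

lemma serre_eq_tau_shift_vertex:
  assumes x: "x \<in> V"
  shows "serre I A par x = tau (shift_vertex x)"
  unfolding serre_def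
proof (rule the_equality)
  have "tau (shift_vertex x) \<in> V" using shift_vertex_props(1)[OF x] V_tau by simp
  then show "tau (shift_vertex x) \<in> V \<and> (\<forall>y\<in>V. hom_dim I A par y (tau (shift_vertex x)) = hom_dim I A par x y)"
    using serre_duality[OF x] unfolding hom_dim_eq_hom_with by simp
  fix z assume "z \<in> V \<and> (\<forall>y\<in>V. hom_dim I A par y z = hom_dim I A par x y)"
  then show "z = tau (shift_vertex x)" using serre_duality_unique[OF x] unfolding hom_dim_eq_hom_with by blast
qed

lemma shift_eq_shift_vertex: "x \<in> V \<Longrightarrow> shift I A par x = shift_vertex x"
  unfolding shift_def by (simp add: serre_eq_tau_shift_vertex)

lemma count_hammock_int: "z \<in> V \<Longrightarrow> int (count (hammock I A par z) v) = (if v \<in> V then hom z v else 0)"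
  using hammock_count[of z v] hom_nonneg[of z v] by simp

lemma hammock_mesh_identity:
  assumes x: "x \<in> V"
  shows "hammock I A par x - {#x#} + {#serre I A par x#} + hammock I A par (tau_inv x)
      = {#serre I A par x, shift I A par x#} + (\<Sum>y\<in>succs x. hammock I A par y)"
proof (rule multiset_eqI)
  fix v
  let ?S = "tau (shift_vertex x)" and ?N = "shift_vertex x"
  have tx: "tau_inv x \<in> V" using x V_tau by simp
  have "int (count (hammock I A par x) x) = 1"
    using count_hammock_int[OF x, of x] x hom_with_self[of "max 0" x] by simp
  then have "count (hammock I A par x) x = 1" by simp
  then have minus: "int (count (hammock I A par x - {#x#}) v) = int (count (hammock I A par x) v) - (if x = v then 1 else 0)"
    by (cases "x = v") simp_all
  have lhs: "int (count (hammock I A par x - {#x#} + {#serre I A par x#} + hammock I A par (tau_inv x)) v)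
      = (if v \<in> V then hom x v + hom (tau_inv x) v else 0) - (if x = v then 1 else 0) + (if v = ?S then 1 else 0)"
    using minus count_hammock_int[OF x, of v] count_hammock_int[OF tx, of v]
    unfolding serre_eq_tau_shift_vertex[OF x] count_union count_single by (simp split: if_splits)
  have succs: "int (\<Sum>y\<in>succs x. count (hammock I A par y) v) = (\<Sum>y\<in>succs x. if v \<in> V then hom y v else 0)"
    unfolding of_nat_sum using count_hammock_int succs_layer by (intro sum.cong) auto
  have rhs: "int (count ({#serre I A par x, shift I A par x#} + (\<Sum>y\<in>succs x. hammock I A par y)) v)
      = (if v = ?S then 1 else 0) + (if v = ?N then 1 else 0) + (\<Sum>y\<in>succs x. if v \<in> V then hom y v else 0)"
    unfolding serre_eq_tau_shift_vertex[OF x] shift_eq_shift_vertex[OF x] count_union count_sum succs[symmetric]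
    by simp
  have "?S \<in> V" "?N \<in> V" using shift_vertex_props(1)[OF x] V_tau by auto
  then have "(if v \<in> V then hom x v + hom (tau_inv x) v else 0) - (if x = v then 1 else 0) + (if v = ?S then 1 else 0)
      = (if v = ?S then 1 else 0) + (if v = ?N then 1 else 0) + (\<Sum>y\<in>succs x. if v \<in> V then hom y v else 0)"
    using hom_contra_mesh[OF x, of v] x by (cases "v \<in> V") auto
  then show "count (hammock I A par x - {#x#} + {#serre I A par x#} + hammock I A par (tau_inv x)) v
      = count ({#serre I A par x, shift I A par x#} + (\<Sum>y\<in>succs x. hammock I A par y)) v"
    using lhs rhs by linarith
qed

lemma hfun_mesh_identity:
  assumes x: "x \<in> V" and v: "v \<in> V"
  shows "hfun I A par x v - delta x v + hfun I A par (tau_inv x) v = (\<Sum>y\<in>succs x. hfun I A par y v)"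
proof -
  have "(\<Sum>y\<in>succs x. hfun I A par y v) = (\<Sum>y\<in>succs x. hlin y v)"
    by (rule sum.cong[OF refl]) (use hfun_eq succs_layer in auto)
  then show ?thesis using hlin_contra_mesh[OF x, of v] hfun_eq[OF x] hfun_eq V_tau x by simp
qed

end

theorem lemma4p5:
  fixes I :: "'i set" and A :: "('i \<times> 'i) set" and par :: "'i \<Rightarrow> bool" and x :: "'i \<times> int"
  assumes "dynkin_quiver I A"
    and "alternating A par"
    and "x \<in> zq_V I par"
  shows "mq_iso I par
           (tensor (mu I A par x (Yobj I A par x)) (Yobj I A par (tau_inv x)))
           (tensor (Fobj I A par x) (tensor_set (Yobj I A par) (zq_succs I A par x)))"
proof -
  interpret dynkin_repetition I A par using assms(1,2) by unfold_locales
  show ?thesis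
    unfolding mq_iso_def tensor_def mu_def Yobj_def Fobj_def tensor_set_def
    using hammock_mesh_identity[OF assms(3)] hfun_mesh_identity[OF assms(3)] by simp
qed

end
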